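(* Let $n\ge m\ge1$, let $X_1,\dots,X_n$ be strings of length $\ell_x$ and $Y_1,\dots,Y_m$ strings of length $\ell_y$ over an alphabet $\Sigma$. Let $\sigma,\rho,\mu\notin\Sigma$ be new symbols, $\kappa_1:=4(\ell_x+\ell_y)$, $\kappa_2:=2\kappa_1+\ell_x$, and $G(S):=\sigma^{\kappa_1}S\rho^{\kappa_1}$. Define $$X:=G(X_1)\,\mu^{\kappa_2}\,G(X_2)\,\mu^{\kappa_2}\cdots\mu^{\kappa_2}\,G(X_n),\qquad Y:=\mu^{n\kappa_2}\,G(Y_1)\,\mu^{\kappa_2}\,G(Y_2)\cdots\mu^{\kappa_2}\,G(Y_m)\,\mu^{n\kappa_2}.$$ Then, with $C:=2n\kappa_2$, $$\min_{\Lambda\in\mathbf\Lambda_{n,m}}\mathrm{cost}(\Lambda)\ \le\ \delta(X,Y)-C\ \le\ \min_{\Lambda\in\mathcal S_{n,m}}\mathrm{cost}(\Lambda).$$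
   Context: For strings $U,V$, $L(U,V)$ is the length of a longest common subsequence and $\delta(U,V):=|U|+|V|-2L(U,V)$. An alignment (w.r.t. $n\ge m$) is a set $\Lambda=\{(i_1,j_1),\dots,(i_k,j_k)\}$ with $0\le k\le m$, $1\le i_1<\dots<i_k\le n$ and $1\le j_1<\dots<j_k\le m$; $\mathbf\Lambda_{n,m}$ is the set of all alignments. A structured alignment is one of the form $\{(\Delta+1,1),\dots,(\Delta+m,m)\}$ with $0\le\Delta\le n-m$; $\mathcal S_{n,m}$ is the set of these. With $\gamma:=\max_{i,j}\delta(X_i,Y_j)$, the cost of $\Lambda=\{(i_1,j_1),\dots,(i_{|\Lambda|},j_{|\Lambda|})\}$ is $\mathrm{cost}(\Lambda):=\sum_{k=1}^{|\Lambda|}\delta(X_{i_k},Y_{j_k})+(m-|\Lambda|)\gamma$ if $|\Lambda|<m$, and $\sum_{k=1}^{m}\delta(X_{i_k},Y_{j_k})+(i_m-i_1-m+1)\gamma$ if $|\Lambda|=m$. *)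

theory Defs
  imports Main "HOL-Library.Sublist"
begin

definition LCS :: "'a list \<Rightarrow> 'a list \<Rightarrow> nat" where
  "LCS U V = Max {length w | w. subseq w U \<and> subseq w V}"

definition lcs_dist :: "'a list \<Rightarrow> 'a list \<Rightarrow> nat" where
  "lcs_dist U V = length U + length V - 2 * LCS U V"

definition alignments :: "nat \<Rightarrow> nat \<Rightarrow> (nat \<times> nat) set set" where
  "alignments n m = {set (zip is js) | is js.
      length is = length js \<and> length is \<le> m \<and>
      sorted_wrt (<) is \<and> sorted_wrt (<) js \<and>
      set is \<subseteq> {1..n} \<and> set js \<subseteq> {1..m}}"

definition structured_alignments :: "nat \<Rightarrow> nat \<Rightarrow> (nat \<times> nat) set set" where
  "structured_alignments n m = {{(\<Delta> + k, k) | k. k \<in> {1..m}} | \<Delta>. \<Delta> \<le> n - m}"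

definition gamma :: "(nat \<Rightarrow> 'a list) \<Rightarrow> (nat \<Rightarrow> 'a list) \<Rightarrow> nat \<Rightarrow> nat \<Rightarrow> nat" where
  "gamma Xs Ys n m = Max {lcs_dist (Xs i) (Ys j) | i j. i \<in> {1..n} \<and> j \<in> {1..m}}"

definition align_cost ::
  "(nat \<Rightarrow> 'a list) \<Rightarrow> (nat \<Rightarrow> 'a list) \<Rightarrow> nat \<Rightarrow> nat \<Rightarrow> (nat \<times> nat) set \<Rightarrow> nat" where
  "align_cost Xs Ys n m \<Lambda> =
     (\<Sum>(i,j)\<in>\<Lambda>. lcs_dist (Xs i) (Ys j)) +
     (if card \<Lambda> < m then (m - card \<Lambda>) * gamma Xs Ys n m
      else (Max (fst ` \<Lambda>) + 1 - Min (fst ` \<Lambda>) - m) * gamma Xs Ys n m)"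

definition Gpad :: "'a \<Rightarrow> 'a \<Rightarrow> nat \<Rightarrow> 'a list \<Rightarrow> 'a list" where
  "Gpad \<sigma> \<rho> k S = replicate k \<sigma> @ S @ replicate k \<rho>"

definition build_X :: "'a \<Rightarrow> 'a \<Rightarrow> 'a \<Rightarrow> nat \<Rightarrow> nat \<Rightarrow> (nat \<Rightarrow> 'a list) \<Rightarrow> nat \<Rightarrow> 'a list" where
  "build_X \<sigma> \<rho> \<mu> k1 k2 Xs n =
     Gpad \<sigma> \<rho> k1 (Xs 1) @ concat (map (\<lambda>i. replicate k2 \<mu> @ Gpad \<sigma> \<rho> k1 (Xs i)) [2..<n+1])"

definition build_Y :: "'a \<Rightarrow> 'a \<Rightarrow> 'a \<Rightarrow> nat \<Rightarrow> nat \<Rightarrow> (nat \<Rightarrow> 'a list) \<Rightarrow> nat \<Rightarrow> nat \<Rightarrow> 'a list" where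
  "build_Y \<sigma> \<rho> \<mu> k1 k2 Ys n m =
     replicate (n * k2) \<mu> @ Gpad \<sigma> \<rho> k1 (Ys 1) @
     concat (map (\<lambda>j. replicate k2 \<mu> @ Gpad \<sigma> \<rho> k1 (Ys j)) [2..<m+1]) @
     replicate (n * k2) \<mu>"

end

theory Submission
  imports Defs
begin

text \<open>
  Write \<open>\<delta>(U,V) = |U| + |V| - 2 L(U,V)\<close>, so that bounding \<open>\<delta>(X,Y)\<close> means bounding the LCS.

  For a structured alignment with offset \<open>\<Delta>\<close>, aligning \<open>G(X\<^sub>\<Delta>\<^sub>+\<^sub>r)\<close> with \<open>G(Y\<^sub>r)\<close>, the
  separators between them with each other, and the remaining separators of \<open>X\<close> with the
  outer runs of \<open>\<mu>\<close> of \<open>Y\<close> gives a common subsequence long enough to bound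
  \<open>\<delta>(X,Y) - C\<close> by the cost of the alignment.

  Conversely, an optimal common subsequence cuts \<open>Y\<close> into consecutive segments, one for
  each block and each separator of \<open>X\<close>. A block whose segment meets several blocks of \<open>Y\<close>
  gains at most \<open>k2 \<le> 4 k1\<close>, paid for by the padding of those blocks; a block meeting only
  \<open>G(Y\<^sub>j)\<close>, and the only one to do so, gains \<open>2 k1 + L(X\<^sub>i,Y\<^sub>j)\<close>; a separator swallowed by
  a block of \<open>Y\<close> gains nothing. The pairs meeting only each other form an alignment whose
  cost is at most \<open>\<delta>(X,Y) - C\<close>. If it matches all \<open>m\<close> blocks of \<open>Y\<close> but is spread out, two
  separators of \<open>X\<close> share one run of \<open>\<mu>\<close> of \<open>Y\<close>, which saves the \<open>k2\<close> needed to drop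
  one pair and pay the penalty \<open>\<gamma>\<close> instead.
\<close>

section \<open>Longest common subsequences\<close>

lemma finite_common_subseq_lengths: "finite {length w | w. subseq w U \<and> subseq w V}"
proof -
  have "{length w | w. subseq w U \<and> subseq w V} \<subseteq> {0..length U}"
    by (auto dest: list_emb_length)
  thus ?thesis by (rule finite_subset) simp
qed

lemma length_le_LCS: "subseq w U \<Longrightarrow> subseq w V \<Longrightarrow> length w \<le> LCS U V"
  unfolding LCS_def by (rule Max_ge[OF finite_common_subseq_lengths]) blast

lemma obtain_LCS_witness:
  obtains w where "subseq w U" "subseq w V" "length w = LCS U V"
proof -
  have "LCS U V \<in> {length w | w. subseq w U \<and> subseq w V}"
    unfolding LCS_def
    by (rule Max_in[OF finite_common_subseq_lengths]) (auto intro: exI[of _ "[]"])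
  thus ?thesis using that by auto
qed

lemma LCS_le_length_left: "LCS U V \<le> length U"
  by (metis obtain_LCS_witness list_emb_length)

lemma LCS_le_length_right: "LCS U V \<le> length V"
  by (metis obtain_LCS_witness list_emb_length)

lemma LCS_refl: "LCS U U = length U"
  using length_le_LCS[of U U U] LCS_le_length_left[of U U] by simp

lemma lcs_dist_add_LCS: "lcs_dist U V + 2 * LCS U V = length U + length V"
  unfolding lcs_dist_def using LCS_le_length_left[of U V] LCS_le_length_right[of U V] by arith

lemma LCS_mono_right: "subseq V V' \<Longrightarrow> LCS U V \<le> LCS U V'"
  by (metis obtain_LCS_witness length_le_LCS subseq_order.order_trans)

lemma LCS_append_ge: "LCS A C + LCS B D \<le> LCS (A @ B) (C @ D)"
proof -
  obtain v where v: "subseq v A" "subseq v C" "length v = LCS A C"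
    by (rule obtain_LCS_witness)
  obtain w where w: "subseq w B" "subseq w D" "length w = LCS B D"
    by (rule obtain_LCS_witness)
  have "length (v @ w) \<le> LCS (A @ B) (C @ D)"
    by (rule length_le_LCS) (rule list_emb_append_mono; fact)+
  thus ?thesis using v w by simp
qed

lemma LCS_append_left_split:
  obtains i where "i \<le> length C" "LCS (A @ B) C = LCS A (take i C) + LCS B (drop i C)"
proof -
  obtain w where w: "subseq w (A @ B)" "subseq w C" "length w = LCS (A @ B) C"
    by (rule obtain_LCS_witness)
  then obtain v v' where vv: "w = v @ v'" "subseq v A" "subseq v' B"
    by (auto elim: subseq_appendE)
  from w(2) vv(1) obtain us vs where uv: "C = us @ vs" "subseq v us" "subseq v' vs"
    using list_emb_appendD by blast
  have "LCS (A @ B) C \<le> LCS A us + LCS B vs"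
    using length_le_LCS[OF vv(2) uv(2)] length_le_LCS[OF vv(3) uv(3)] w(3) vv(1) by simp
  moreover have "LCS A us + LCS B vs \<le> LCS (A @ B) C"
    using LCS_append_ge[of A us B vs] uv(1) by simp
  ultimately show ?thesis using that[of "length us"] uv(1) by simp
qed

lemma set_mono_subseq: "subseq w A \<Longrightarrow> set w \<subseteq> set A"
  by (induct rule: list_emb.induct) auto

lemma LCS_le_LCS_filter_right:
  assumes "set A \<subseteq> {x. P x}"
  shows "LCS A C \<le> LCS A (filter P C)"
proof -
  obtain w where w: "subseq w A" "subseq w C" "length w = LCS A C"
    by (rule obtain_LCS_witness)
  have "filter P w = w"
    using set_mono_subseq[OF w(1)] assms by (auto simp: filter_id_conv)
  then have "subseq w (filter P C)" using subseq_filter[OF w(2), of P] by simp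
  thus ?thesis using length_le_LCS[OF w(1)] w(3) by simp
qed

lemma LCS_le_length_filter:
  "set A \<subseteq> {x. P x} \<Longrightarrow> LCS A C \<le> length (filter P C)"
  using LCS_le_LCS_filter_right LCS_le_length_right order_trans by blast

lemma LCS_Gpad_ge: "2 * k + LCS A B \<le> LCS (Gpad \<sigma> \<rho> k A) (Gpad \<sigma> \<rho> k B)"
proof -
  obtain w where w: "subseq w A" "subseq w B" "length w = LCS A B"
    by (rule obtain_LCS_witness)
  have "length (replicate k \<sigma> @ w @ replicate k \<rho>) \<le> LCS (Gpad \<sigma> \<rho> k A) (Gpad \<sigma> \<rho> k B)"
    unfolding Gpad_def using w(1,2)
    by (intro length_le_LCS list_emb_append_mono list_emb_refl) auto
  thus ?thesis using w by simp
qed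

text \<open>Count the three kinds of letters of a common subsequence separately: the padding
  letters are bounded by \<open>k\<close> each, the others form a common subsequence of \<open>A\<close> and \<open>B\<close>.\<close>

lemma LCS_Gpad_le:
  assumes "\<sigma> \<notin> set A" "\<sigma> \<notin> set B" "\<rho> \<notin> set A" "\<rho> \<notin> set B" "\<sigma> \<noteq> \<rho>"
  shows "LCS (Gpad \<sigma> \<rho> k A) (Gpad \<sigma> \<rho> k B) \<le> 2 * k + LCS A B"
proof -
  let ?GA = "Gpad \<sigma> \<rho> k A" and ?GB = "Gpad \<sigma> \<rho> k B"
  let ?P = "\<lambda>x. x \<noteq> \<sigma> \<and> x \<noteq> \<rho>"
  obtain w where w: "subseq w ?GA" "subseq w ?GB" "length w = LCS ?GA ?GB"
    by (rule obtain_LCS_witness)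
  have "filter ?P ?GA = A" "filter ?P ?GB = B"
    using assms unfolding Gpad_def by (auto simp: filter_replicate intro!: filter_True)
  then have other: "length (filter ?P w) \<le> LCS A B"
    using length_le_LCS[OF subseq_filter[OF w(1), of ?P] subseq_filter[OF w(2), of ?P]] by simp
  have count_le: "length (filter (\<lambda>x. x = z) w) \<le> length (filter (\<lambda>x. x = z) ?GA)" for z
    using list_emb_length[OF subseq_filter[OF w(1)]] .
  have "length (filter (\<lambda>x. x = \<sigma>) ?GA) = k" "length (filter (\<lambda>x. x = \<rho>) ?GA) = k"
    using assms unfolding Gpad_def by (auto simp: filter_replicate filter_empty_conv)
  then have pad: "length (filter (\<lambda>x. x = \<sigma>) w) \<le> k" "length (filter (\<lambda>x. x = \<rho>) w) \<le> k"
    using count_le by metis+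
  have "length w = length (filter ?P w) + length (filter (\<lambda>x. x = \<sigma>) w)
                   + length (filter (\<lambda>x. x = \<rho>) w)"
    using assms(5) by (induct w) auto
  thus ?thesis using other pad w(3) by simp
qed

lemma LCS_Gpad:
  assumes "\<sigma> \<notin> set A" "\<sigma> \<notin> set B" "\<rho> \<notin> set A" "\<rho> \<notin> set B" "\<sigma> \<noteq> \<rho>"
  shows "LCS (Gpad \<sigma> \<rho> k A) (Gpad \<sigma> \<rho> k B) = 2 * k + LCS A B"
  using LCS_Gpad_le[OF assms] LCS_Gpad_ge by (rule antisym)

text \<open>\<open>c k\<close> is the position in \<open>C\<close> where the part matched against \<open>p k\<close> begins.\<close>

lemma LCS_concat_left_split:
  obtains c where "mono c" "\<And>k. r \<le> k \<Longrightarrow> c k = length C"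
    "LCS (concat (map p [0..<r])) C = (\<Sum>k<r. LCS (p k) (drop (c k) (take (c (Suc k)) C)))"
proof (induction r arbitrary: C thesis)
  case 0
  show ?case
    by (rule "0.prems"[of "\<lambda>_. length C"]) (use LCS_le_length_left[of "[]" C] in \<open>auto simp: mono_def\<close>)
next
  case (Suc r)
  obtain i where i: "i \<le> length C"
    "LCS (concat (map p [0..<r]) @ p r) C
      = LCS (concat (map p [0..<r])) (take i C) + LCS (p r) (drop i C)"
    by (rule LCS_append_left_split)
  obtain c' where c': "mono c'" "\<And>k. r \<le> k \<Longrightarrow> c' k = length (take i C)"
    "LCS (concat (map p [0..<r])) (take i C) =
       (\<Sum>k<r. LCS (p k) (drop (c' k) (take (c' (Suc k)) (take i C))))"
    using Suc.IH[of "take i C"] by blast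
  have c'_r: "c' k = i" if "r \<le> k" for k using c'(2)[OF that] i(1) by simp
  have c'_le: "c' k \<le> i" if "k \<le> r" for k
    using monoD[OF c'(1) that] c'_r[of r] by simp
  define c where "c k = (if k \<le> r then c' k else length C)" for k
  show ?case
  proof (rule Suc.prems)
    show "mono c"
      unfolding c_def mono_def using c'_le i(1) monoD[OF c'(1)] by (auto intro: order_trans)
    show "\<And>k. Suc r \<le> k \<Longrightarrow> c k = length C" by (simp add: c_def)
    have "(\<Sum>k<r. LCS (p k) (drop (c' k) (take (c' (Suc k)) (take i C))))
        = (\<Sum>k<r. LCS (p k) (drop (c k) (take (c (Suc k)) C)))"
      using c'_le by (intro sum.cong) (auto simp: c_def min_def)
    moreover have "drop (c r) (take (c (Suc r)) C) = drop i C"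
      using c'_r[of r] by (simp add: c_def)
    ultimately show "LCS (concat (map p [0..<Suc r])) C
        = (\<Sum>k<Suc r. LCS (p k) (drop (c k) (take (c (Suc k)) C)))"
      using i(2) c'(3) by simp
  qed
qed

lemma sum_LCS_le_LCS_concat:
  "(\<Sum>k<r. LCS (f k) (g k)) \<le> LCS (concat (map f [0..<r])) (concat (map g [0..<r]))"
proof (induction r)
  case (Suc r)
  thus ?case
    using LCS_append_ge[of "concat (map f [0..<r])" "concat (map g [0..<r])" "f r" "g r"] by simp
qed simp

lemma sum_even_odd_split:
  fixes F :: "nat \<Rightarrow> 'b::comm_monoid_add"
  assumes "1 \<le> n"
  shows "(\<Sum>k<2 * n - 1. F k) = (\<Sum>t<n. F (2 * t)) + (\<Sum>t<n - 1. F (2 * t + 1))"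
proof -
  obtain n' where "n = Suc n'" using assms by (cases n) auto
  moreover have "(\<Sum>k<Suc (2 * n'). F k) = (\<Sum>t<Suc n'. F (2 * t)) + (\<Sum>t<n'. F (2 * t + 1))"
    by (induction n') (simp_all add: algebra_simps)
  ultimately show ?thesis by simp
qed

lemma sum_lessThan_split:
  fixes f :: "nat \<Rightarrow> 'b::comm_monoid_add"
  assumes "u0 \<le> u" shows "(\<Sum>t<u. f t) = (\<Sum>t<u0. f t) + (\<Sum>t\<in>{u0..<u}. f t)"
  using sum.atLeastLessThan_concat[OF _ assms, of 0 f] by (simp add: lessThan_atLeast0)

lemma concat_interleave:
  assumes "1 \<le> n"
  shows "f 1 @ concat (map (\<lambda>i. S @ f i) [2..<n + 1]) =
         concat (map (\<lambda>k. if even k then f (k div 2 + 1) else S) [0..<2 * n - 1])"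
  using assms
proof (induction n rule: dec_induct)
  case (step n)
  have "2 * Suc n - 1 = Suc (Suc (2 * n - 1))" "Suc (2 * n - 1) = 2 * n"
    using step.hyps by simp_all
  then have "[0..<2 * Suc n - 1] = [0..<2 * n - 1] @ [2 * n - 1, 2 * n]"
    by (metis append.assoc append_Cons append_Nil upt_Suc_append zero_le)
  moreover have "[2..<Suc n + 1] = [2..<n + 1] @ [n + 1]" "odd (2 * n - 1)"
    using step.hyps by auto
  ultimately show ?case using step.IH by simp
qed simp

lemma length_filter_upt: "length (filter P [x..<y]) = card {q. x \<le> q \<and> q < y \<and> P q}"
proof -
  have "length (filter P [x..<y]) = card (set (filter P [x..<y]))"
    by (rule distinct_card[symmetric]) simp
  also have "set (filter P [x..<y]) = {q. x \<le> q \<and> q < y \<and> P q}" by auto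
  finally show ?thesis .
qed

section \<open>Alignments from chains\<close>

lemma sorted_lists_of_chain:
  fixes L :: "(nat \<times> nat) set"
  assumes "finite L" "\<forall>p\<in>L. \<forall>q\<in>L. fst p < fst q \<longrightarrow> snd p < snd q" "inj_on fst L"
  shows "\<exists>is js. length is = length js \<and> sorted_wrt (<) is \<and> sorted_wrt (<) js \<and>
     set (zip is js) = L \<and> set is = fst ` L \<and> set js = snd ` L"
  using assms
proof (induction L rule: finite_ranking_induct[where f = fst])
  case empty
  show ?case by (intro exI[of _ "[]"]) simp
next
  case (insert x S)
  show ?case
  proof (cases "x \<in> S")
    case True thus ?thesis using insert by (simp add: insert_absorb)
  next
    case False
    have "inj_on fst S" using insert.prems(2) by (rule inj_on_subset) blast
    then obtain "is" js where ij: "length is = length js" "sorted_wrt (<) is" "sorted_wrt (<) js"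
      "set (zip is js) = S" "set is = fst ` S" "set js = snd ` S"
      using insert.IH insert.prems(1) by blast
    have fst_less: "fst y < fst x" if "y \<in> S" for y
    proof -
      have "fst y \<noteq> fst x"
        using insert.prems(2) that False by (auto simp: inj_on_def)
      thus ?thesis using insert.hyps(2)[OF that] by simp
    qed
    have snd_less: "snd y < snd x" if "y \<in> S" for y
      using insert.prems(1) fst_less[OF that] that by blast
    show ?thesis
      by (intro exI[of _ "is @ [fst x]"] exI[of _ "js @ [snd x]"])
        (use ij fst_less snd_less in \<open>auto simp: sorted_wrt_append\<close>)
  qed
qed

lemma chain_in_alignments:
  fixes L :: "(nat \<times> nat) set"
  assumes "finite L" "\<forall>p\<in>L. \<forall>q\<in>L. fst p < fst q \<longrightarrow> snd p < snd q" "inj_on fst L"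
    "L \<subseteq> {1..n} \<times> {1..m}"
  shows "L \<in> alignments n m"
proof -
  obtain "is" js where ij: "length is = length js" "sorted_wrt (<) is" "sorted_wrt (<) js"
     "set (zip is js) = L" "set is = fst ` L" "set js = snd ` L"
    using sorted_lists_of_chain[OF assms(1-3)] by blast
  have "length js = card (snd ` L)"
    using ij(3,6) by (metis distinct_card strict_sorted_iff)
  also have "\<dots> \<le> card {1..m}" using assms(4) by (intro card_mono) auto
  finally have "length is \<le> m" using ij(1) by simp
  moreover have "set is \<subseteq> {1..n}" "set js \<subseteq> {1..m}" using ij(5,6) assms(4) by auto
  ultimately show ?thesis unfolding alignments_def using ij by blast
qed

lemma inj_on_Suc_pair: "inj_on (\<lambda>(t, j). (Suc t, Suc j)) A"
  by (rule inj_onI) auto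

lemma finite_alignments: "finite (alignments n m)"
proof -
  have "alignments n m \<subseteq> Pow ({1..n} \<times> {1..m})"
    unfolding alignments_def by (auto dest: set_zip_leftD set_zip_rightD)
  thus ?thesis by (rule finite_subset) simp
qed

section \<open>The strings \<open>X\<close> and \<open>Y\<close>\<close>

locale lcs_reduction =
  fixes \<Sigma> :: "'a set" and Xs Ys :: "nat \<Rightarrow> 'a list" and \<sigma> \<rho> \<mu> :: 'a and n m lx ly :: nat
  assumes m_pos: "1 \<le> m" and m_le_n: "m \<le> n"
    and Xs_props: "\<And>i. i \<in> {1..n} \<Longrightarrow> length (Xs i) = lx \<and> set (Xs i) \<subseteq> \<Sigma>"
    and Ys_props: "\<And>j. j \<in> {1..m} \<Longrightarrow> length (Ys j) = ly \<and> set (Ys j) \<subseteq> \<Sigma>"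
    and sigma_notin: "\<sigma> \<notin> \<Sigma>" and rho_notin: "\<rho> \<notin> \<Sigma>" and mu_notin: "\<mu> \<notin> \<Sigma>"
    and sigma_ne_rho: "\<sigma> \<noteq> \<rho>" and sigma_ne_mu: "\<sigma> \<noteq> \<mu>" and rho_ne_mu: "\<rho> \<noteq> \<mu>"
begin

text \<open>Every \<open>G(X\<^sub>i)\<close> and every separating run of \<open>\<mu>\<close> has length \<open>k2\<close>, every \<open>G(Y\<^sub>j)\<close>
  has length \<open>lenGY\<close>. Blocks are indexed from \<open>0\<close>, and \<open>Y\<close> is described letter by letter:
  its \<open>j\<close>-th block occupies the positions \<open>[ystart j, ystart j + lenGY)\<close>.\<close>

definition k1 where "k1 = 4 * (lx + ly)"
definition k2 where "k2 = 2 * k1 + lx"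
definition lenGY where "lenGY = 2 * k1 + ly"

definition GX where "GX t = Gpad \<sigma> \<rho> k1 (Xs (t + 1))"
definition GY where "GY j = Gpad \<sigma> \<rho> k1 (Ys (j + 1))"

definition ystart where "ystart j = n * k2 + j * (lenGY + k2)"
definition in_block where "in_block q \<longleftrightarrow> (\<exists>j<m. ystart j \<le> q \<and> q < ystart j + lenGY)"
definition block_of where "block_of q = (q - n * k2) div (lenGY + k2)"
definition ychar where
  "ychar q = (if in_block q then GY (block_of q) ! (q - ystart (block_of q)) else \<mu>)"
definition lenY where "lenY = ystart (m - 1) + lenGY + n * k2"

abbreviation X where "X \<equiv> build_X \<sigma> \<rho> \<mu> k1 k2 Xs n"
abbreviation Y where "Y \<equiv> build_Y \<sigma> \<rho> \<mu> k1 k2 Ys n m"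

definition xpiece where "xpiece k = (if even k then GX (k div 2) else replicate k2 \<mu>)"
definition ypiece where "ypiece k = (if even k then GY (k div 2) else replicate k2 \<mu>)"

lemma n_pos: "1 \<le> n"
  using m_pos m_le_n by simp

lemma k2_le: "k2 \<le> 4 * k1" and lenGY_le: "lenGY \<le> k2 + 2 * k1"
  unfolding k2_def lenGY_def k1_def by simp_all

lemma ystart_mono: "j \<le> j' \<Longrightarrow> ystart j \<le> ystart j'"
  unfolding ystart_def by (simp add: mult_le_mono1)

lemma ystart_Suc: "ystart (Suc j) = ystart j + lenGY + k2"
  unfolding ystart_def by (simp add: algebra_simps)

lemma ystart_gap: "j < j' \<Longrightarrow> ystart j + lenGY + k2 \<le> ystart j'"
  using ystart_mono[of "Suc j" j'] ystart_Suc[of j] by simp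

lemma block_of_ystart: "i < lenGY + k2 \<Longrightarrow> block_of (ystart j + i) = j"
  unfolding block_of_def ystart_def by (cases "lenGY + k2 = 0") (simp_all add: add.commute)

lemma in_block_ystart: "j < m \<Longrightarrow> i < lenGY \<Longrightarrow> in_block (ystart j + i)"
  unfolding in_block_def by (intro exI[of _ j]) auto

lemma in_blockE:
  assumes "in_block q" obtains j i where "j < m" "i < lenGY" "q = ystart j + i"
proof -
  from assms obtain j where "j < m" "ystart j \<le> q" "q < ystart j + lenGY"
    unfolding in_block_def by blast
  thus ?thesis using that[of j "q - ystart j"] by simp
qed

lemma not_in_block_between:
  assumes "ystart j + lenGY \<le> q" "q < ystart (Suc j)" shows "\<not> in_block q"
proof
  assume "in_block q"
  then obtain j' i where ji: "j' < m" "i < lenGY" "q = ystart j' + i" by (rule in_blockE)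
  show False
  proof (cases "j' \<le> j")
    case True thus False using ystart_mono[OF True] ji assms by simp
  next
    case False thus False using ystart_mono[of "Suc j" j'] ji assms by simp
  qed
qed

lemma not_in_block_before: "q < n * k2 \<Longrightarrow> \<not> in_block q"
  unfolding in_block_def ystart_def by auto

lemma not_in_block_after:
  assumes "ystart (m - 1) + lenGY \<le> q" shows "\<not> in_block q"
proof
  assume "in_block q"
  then obtain j i where ji: "j < m" "i < lenGY" "q = ystart j + i" by (rule in_blockE)
  then have "ystart j \<le> ystart (m - 1)" by (intro ystart_mono) simp
  thus False using ji assms by simp
qed

lemma gap_between_blocks:
  assumes "Suc j < m" "ystart j \<le> q" "q < ystart (Suc j) + lenGY" "\<not> in_block q"
  shows "q \<in> {ystart j + lenGY..<ystart (Suc j)}"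
proof -
  have "\<not> (ystart j \<le> q \<and> q < ystart j + lenGY)"
    "\<not> (ystart (Suc j) \<le> q \<and> q < ystart (Suc j) + lenGY)"
    using assms(1,4) Suc_lessD[OF assms(1)] unfolding in_block_def by blast+
  thus ?thesis using assms(2,3) by auto
qed

lemma length_GX: "t < n \<Longrightarrow> length (GX t) = k2"
  unfolding GX_def Gpad_def k2_def using Xs_props[of "t + 1"] by auto

lemma length_GY: "j < m \<Longrightarrow> length (GY j) = lenGY"
  unfolding GY_def Gpad_def lenGY_def using Ys_props[of "j + 1"] by auto

lemma mu_notin_GX: "t < n \<Longrightarrow> \<mu> \<notin> set (GX t)"
  unfolding GX_def Gpad_def using Xs_props[of "t + 1"] mu_notin sigma_ne_mu rho_ne_mu by auto

lemma mu_notin_GY: "j < m \<Longrightarrow> \<mu> \<notin> set (GY j)"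
  unfolding GY_def Gpad_def using Ys_props[of "j + 1"] mu_notin sigma_ne_mu rho_ne_mu by auto

lemma ychar_ystart: "j < m \<Longrightarrow> i < lenGY \<Longrightarrow> ychar (ystart j + i) = GY j ! i"
  unfolding ychar_def using in_block_ystart block_of_ystart by simp

lemma ychar_eq_mu_iff: "ychar q = \<mu> \<longleftrightarrow> \<not> in_block q"
proof
  assume mu: "ychar q = \<mu>"
  show "\<not> in_block q"
  proof
    assume "in_block q"
    then obtain j i where ji: "j < m" "i < lenGY" "q = ystart j + i" by (rule in_blockE)
    have "ychar q \<in> set (GY j)" using ychar_ystart[OF ji(1,2)] ji length_GY[OF ji(1)] by simp
    thus False using mu mu_notin_GY[OF ji(1)] by simp
  qed
qed (simp add: ychar_def)

lemma map_ychar_block: "j < m \<Longrightarrow> map ychar [ystart j..<ystart j + lenGY] = GY j"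
  by (rule nth_equalityI) (simp_all add: length_GY, metis ychar_ystart)

lemma map_ychar_gap:
  assumes "\<And>q. x \<le> q \<Longrightarrow> q < y \<Longrightarrow> \<not> in_block q"
  shows "map ychar [x..<y] = replicate (y - x) \<mu>"
  by (rule nth_equalityI) (use assms in \<open>simp_all add: ychar_def\<close>)

lemma map_ychar_upt_append:
  assumes "x \<le> y" "y \<le> z" shows "map ychar [x..<z] = map ychar [x..<y] @ map ychar [y..<z]"
  using upt_add_eq_append[of x y "z - y"] assms by simp

lemma concat_ypiece:
  "j < m \<Longrightarrow> concat (map ypiece [0..<2 * j + 1]) = map ychar [n * k2..<ystart j + lenGY]"
proof (induction j)
  case 0
  show ?case using map_ychar_block[of 0] m_pos by (simp add: ypiece_def ystart_def)
next
  case (Suc j)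
  have sep: "ypiece (2 * j + 1) = map ychar [ystart j + lenGY..<ystart (Suc j)]"
    using map_ychar_gap[of "ystart j + lenGY" "ystart (Suc j)"] not_in_block_between[of j]
    by (simp add: ypiece_def ystart_Suc)
  have blk: "ypiece (2 * j + 2) = map ychar [ystart (Suc j)..<ystart (Suc j) + lenGY]"
    using map_ychar_block[OF Suc.prems] by (simp add: ypiece_def)
  have "n * k2 \<le> ystart j + lenGY" "ystart j + lenGY \<le> ystart (Suc j)"
    by (simp_all add: ystart_def)
  then have "map ychar [n * k2..<ystart (Suc j) + lenGY]
      = map ychar [n * k2..<ystart j + lenGY] @ map ychar [ystart j + lenGY..<ystart (Suc j)]
        @ map ychar [ystart (Suc j)..<ystart (Suc j) + lenGY]"
    using map_ychar_upt_append[of "n * k2" "ystart (Suc j)" "ystart (Suc j) + lenGY"]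
      map_ychar_upt_append[of "n * k2" "ystart j + lenGY" "ystart (Suc j)"] by simp
  thus ?case using Suc sep blk by (simp add: numeral_2_eq_2)
qed

lemma X_eq_concat_xpiece: "X = concat (map xpiece [0..<2 * n - 1])"
proof -
  have "X = concat (map (\<lambda>k. if even k then Gpad \<sigma> \<rho> k1 (Xs (k div 2 + 1))
      else replicate k2 \<mu>) [0..<2 * n - 1])"
    unfolding build_X_def by (rule concat_interleave[OF n_pos])
  also have "(\<lambda>k. if even k then Gpad \<sigma> \<rho> k1 (Xs (k div 2 + 1)) else replicate k2 \<mu>) = xpiece"
    by (simp add: fun_eq_iff xpiece_def GX_def)
  finally show ?thesis .
qed

lemma Y_eq_concat_ypiece:
  "Y = replicate (n * k2) \<mu> @ concat (map ypiece [0..<2 * m - 1]) @ replicate (n * k2) \<mu>"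
proof -
  have "Gpad \<sigma> \<rho> k1 (Ys 1) @ concat (map (\<lambda>j. replicate k2 \<mu> @ Gpad \<sigma> \<rho> k1 (Ys j)) [2..<m + 1])
      = concat (map (\<lambda>k. if even k then Gpad \<sigma> \<rho> k1 (Ys (k div 2 + 1)) else replicate k2 \<mu>)
          [0..<2 * m - 1])"
    by (rule concat_interleave[OF m_pos])
  also have "(\<lambda>k. if even k then Gpad \<sigma> \<rho> k1 (Ys (k div 2 + 1)) else replicate k2 \<mu>) = ypiece"
    by (simp add: fun_eq_iff ypiece_def GY_def)
  finally show ?thesis unfolding build_Y_def by simp
qed

lemma Y_eq_map_ychar: "Y = map ychar [0..<lenY]"
proof -
  have "2 * m - 1 = 2 * (m - 1) + 1" using m_pos by simp
  then have mid: "concat (map ypiece [0..<2 * m - 1]) = map ychar [n * k2..<ystart (m - 1) + lenGY]"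
    using concat_ypiece[of "m - 1"] m_pos by simp
  have "replicate (n * k2) \<mu> = map ychar [0..<n * k2]"
    using map_ychar_gap[of 0 "n * k2"] not_in_block_before by simp
  moreover have "replicate (n * k2) \<mu> = map ychar [ystart (m - 1) + lenGY..<lenY]"
    using map_ychar_gap[of "ystart (m - 1) + lenGY" lenY] not_in_block_after
    unfolding lenY_def by simp
  moreover have "map ychar [0..<lenY] = map ychar [0..<n * k2]
      @ map ychar [n * k2..<ystart (m - 1) + lenGY] @ map ychar [ystart (m - 1) + lenGY..<lenY]"
  proof -
    have "n * k2 \<le> ystart (m - 1) + lenGY" "ystart (m - 1) + lenGY \<le> lenY"
      by (simp_all add: lenY_def ystart_def)
    thus ?thesis
      using map_ychar_upt_append[of "n * k2" "ystart (m - 1) + lenGY" lenY]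
        map_ychar_upt_append[of 0 "n * k2" lenY] by simp
  qed
  ultimately show ?thesis unfolding Y_eq_concat_ypiece mid by simp
qed

lemma length_X: "length X = (2 * n - 1) * k2"
proof -
  have "map length (map xpiece [0..<2 * n - 1]) = replicate (2 * n - 1) k2"
    by (rule nth_equalityI) (auto simp: xpiece_def length_GX)
  thus ?thesis unfolding X_eq_concat_xpiece length_concat by (simp add: sum_list_replicate)
qed

lemma length_Y: "length Y = 2 * n * k2 + m * lenGY + (m - 1) * k2"
proof -
  have "(m - 1) * (lenGY + k2) + lenGY = m * lenGY + (m - 1) * k2"
    using m_pos by (cases m) (auto simp: algebra_simps)
  thus ?thesis unfolding Y_eq_map_ychar lenY_def ystart_def by simp
qed

definition block_count where "block_count x y = card {q. x \<le> q \<and> q < y \<and> in_block q}"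
definition gap_count where "gap_count x y = card {q. x \<le> q \<and> q < y \<and> \<not> in_block q}"
definition inner_lcs where "inner_lcs t j = LCS (Xs (t + 1)) (Ys (j + 1))"

lemma filter_map_ychar_not_mu:
  "filter (\<lambda>z. z \<noteq> \<mu>) (map ychar [x..<y]) = map ychar (filter in_block [x..<y])"
  by (simp add: filter_map comp_def ychar_eq_mu_iff)

lemma LCS_GX_le_block_count: "t < n \<Longrightarrow> LCS (GX t) (map ychar [x..<y]) \<le> block_count x y"
  using LCS_le_length_filter[of "GX t" "\<lambda>z. z \<noteq> \<mu>" "map ychar [x..<y]"] mu_notin_GX[of t]
  unfolding filter_map_ychar_not_mu block_count_def by (auto simp: length_filter_upt)

lemma LCS_GX_le_k2: "t < n \<Longrightarrow> LCS (GX t) C \<le> k2"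
  using LCS_le_length_left[of "GX t" C] length_GX[of t] by simp

lemma LCS_sep_le_gap_count: "LCS (replicate k2 \<mu>) (map ychar [x..<y]) \<le> gap_count x y"
proof -
  have "LCS (replicate k2 \<mu>) (map ychar [x..<y]) \<le> length (filter (\<lambda>z. z = \<mu>) (map ychar [x..<y]))"
    by (rule LCS_le_length_filter) auto
  thus ?thesis by (simp add: filter_map comp_def ychar_eq_mu_iff gap_count_def length_filter_upt)
qed

lemma LCS_sep_le_k2: "LCS (replicate k2 \<mu>) C \<le> k2"
  using LCS_le_length_left[of "replicate k2 \<mu>" C] by simp

lemma LCS_GX_GY: "t < n \<Longrightarrow> j < m \<Longrightarrow> LCS (GX t) (GY j) = 2 * k1 + inner_lcs t j"
  unfolding GX_def GY_def inner_lcs_def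
  using Xs_props[of "t + 1"] Ys_props[of "j + 1"] sigma_notin rho_notin sigma_ne_rho
  by (intro LCS_Gpad) auto

text \<open>Deleting the \<open>\<mu>\<close>'s, which \<open>GX t\<close> does not contain, leaves a subsequence of \<open>GY j\<close>.\<close>

lemma LCS_GX_segment_le:
  assumes t: "t < n" and j: "j < m"
    and only_j: "\<And>q. x \<le> q \<Longrightarrow> q < y \<Longrightarrow> in_block q \<Longrightarrow> ystart j \<le> q \<and> q < ystart j + lenGY"
  shows "LCS (GX t) (map ychar [x..<y]) \<le> 2 * k1 + inner_lcs t j"
proof -
  have "LCS (GX t) (map ychar [x..<y]) \<le> LCS (GX t) (map ychar (filter in_block [x..<y]))"
    using LCS_le_LCS_filter_right[of "GX t" "\<lambda>z. z \<noteq> \<mu>" "map ychar [x..<y]"] mu_notin_GX[OF t]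
    unfolding filter_map_ychar_not_mu by auto
  also have "\<dots> \<le> LCS (GX t) (map ychar [ystart j..<ystart j + lenGY])"
  proof (intro LCS_mono_right subseq_map sorted_subset_imp_subseq)
    show "set (filter in_block [x..<y]) \<subseteq> set [ystart j..<ystart j + lenGY]" using only_j by auto
    show "sorted_wrt (<) (filter in_block [x..<y])" by (rule sorted_wrt_filter) simp
  qed (simp add: sorted_wrt_iff_nth_less)
  also have "\<dots> = 2 * k1 + inner_lcs t j" using map_ychar_block[OF j] LCS_GX_GY[OF t j] by simp
  finally show ?thesis .
qed

lemma replicate_mu_subseq_xpieces: "subseq (replicate (r * k2) \<mu>) (concat (map xpiece [x..<x + 2 * r]))"
proof (induction r)
  case (Suc r)
  have "subseq (replicate k2 \<mu>) (xpiece (x + 2 * r) @ xpiece (x + 2 * r + 1))"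
    by (cases "even x") (simp_all add: xpiece_def subseq_drop_many subseq_rev_drop_many)
  from list_emb_append_mono[OF Suc.IH this]
  show ?case by (simp add: replicate_add add.commute[of k2])
qed simp

lemma LCS_xpieces_mu:
  assumes "r \<le> n" shows "r * k2 \<le> LCS (concat (map xpiece [x..<x + 2 * r])) (replicate (n * k2) \<mu>)"
proof -
  have "replicate (n * k2) \<mu> = replicate (r * k2) \<mu> @ replicate ((n - r) * k2) \<mu>"
    using assms by (simp add: replicate_add[symmetric] add_mult_distrib[symmetric])
  then have "subseq (replicate (r * k2) \<mu>) (replicate (n * k2) \<mu>)"
    by (simp add: subseq_rev_drop_many)
  from length_le_LCS[OF replicate_mu_subseq_xpieces this] show ?thesis by simp
qed

lemma LCS_ge_shifted:
  assumes "\<Delta> + m \<le> n"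
  shows "(n - 1) * k2 + 2 * k1 * m + (\<Sum>r<m. inner_lcs (\<Delta> + r) r) \<le> LCS X Y"
proof -
  define A where "A = concat (map xpiece [0..<0 + 2 * \<Delta>])"
  define B where "B = concat (map (\<lambda>k. xpiece (2 * \<Delta> + k)) [0..<2 * m - 1])"
  define C where "C = concat (map xpiece [2 * \<Delta> + (2 * m - 1)..<2 * \<Delta> + (2 * m - 1) + 2 * (n - \<Delta> - m)])"
  let ?YB = "concat (map ypiece [0..<2 * m - 1])"
  have "X = A @ B @ C"
  proof -
    have "2 * n - 1 = 2 * \<Delta> + (2 * m - 1) + 2 * (n - \<Delta> - m)" using assms m_pos by simp
    then have "[0..<2 * n - 1] = [0..<2 * \<Delta>] @ [2 * \<Delta>..<2 * \<Delta> + (2 * m - 1)]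
        @ [2 * \<Delta> + (2 * m - 1)..<2 * \<Delta> + (2 * m - 1) + 2 * (n - \<Delta> - m)]"
      by (metis append.assoc upt_add_eq_append zero_le)
    moreover have "[2 * \<Delta>..<2 * \<Delta> + (2 * m - 1)] = map (\<lambda>k. 2 * \<Delta> + k) [0..<2 * m - 1]"
      by (simp add: map_add_upt add.commute)
    ultimately show ?thesis unfolding X_eq_concat_xpiece A_def B_def C_def by (simp add: comp_def)
  qed
  moreover have "Y = replicate (n * k2) \<mu> @ ?YB @ replicate (n * k2) \<mu>"
    by (rule Y_eq_concat_ypiece)
  ultimately have "LCS A (replicate (n * k2) \<mu>) + LCS B ?YB + LCS C (replicate (n * k2) \<mu>) \<le> LCS X Y"
    using LCS_append_ge[of B ?YB C "replicate (n * k2) \<mu>"]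
      LCS_append_ge[of A "replicate (n * k2) \<mu>" "B @ C" "?YB @ replicate (n * k2) \<mu>"] by simp
  moreover have "\<Delta> * k2 \<le> LCS A (replicate (n * k2) \<mu>)"
    unfolding A_def using assms by (intro LCS_xpieces_mu) simp
  moreover have "(n - \<Delta> - m) * k2 \<le> LCS C (replicate (n * k2) \<mu>)"
    unfolding C_def by (intro LCS_xpieces_mu) simp
  moreover have "(\<Sum>r<m. 2 * k1 + inner_lcs (\<Delta> + r) r) + (\<Sum>r<m - 1. k2) \<le> LCS B ?YB"
  proof -
    have "(\<Sum>r<m. 2 * k1 + inner_lcs (\<Delta> + r) r) = (\<Sum>r<m. LCS (xpiece (2 * \<Delta> + 2 * r)) (ypiece (2 * r)))"
      using assms by (intro sum.cong) (auto simp: xpiece_def ypiece_def LCS_GX_GY)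
    moreover have "(\<Sum>r<m - 1. k2) = (\<Sum>r<m - 1. LCS (xpiece (2 * \<Delta> + (2 * r + 1))) (ypiece (2 * r + 1)))"
      by (simp add: xpiece_def ypiece_def LCS_refl)
    ultimately show ?thesis
      using sum_LCS_le_LCS_concat[of "\<lambda>k. xpiece (2 * \<Delta> + k)" ypiece "2 * m - 1"]
      unfolding B_def sum_even_odd_split[OF m_pos] by simp
  qed
  moreover have "\<Delta> * k2 + (m - 1) * k2 + (n - \<Delta> - m) * k2 = (n - 1) * k2"
    using assms m_pos by (simp add: add_mult_distrib[symmetric])
  moreover have "(\<Sum>r<m. 2 * k1 + inner_lcs (\<Delta> + r) r) = 2 * k1 * m + (\<Sum>r<m. inner_lcs (\<Delta> + r) r)"
    by (simp add: sum.distrib)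
  ultimately show ?thesis by simp
qed

lemma length_X_add_length_Y:
  "length X + length Y = 2 * n * k2 + 2 * (n - 1) * k2 + m * (lx + ly) + 4 * k1 * m"
proof -
  obtain n' where n': "n = Suc n'" using n_pos by (cases n) auto
  obtain m' where m': "m = Suc m'" using m_pos by (cases m) auto
  have "length X + length Y = (2 * n - 1) * k2 + (2 * n * k2 + m * lenGY + (m - 1) * k2)"
    by (simp add: length_X length_Y)
  also have "\<dots> = 2 * n * k2 + 2 * (n - 1) * k2 + m * (lx + ly) + 4 * k1 * m"
    unfolding n' m' lenGY_def k2_def by (simp add: algebra_simps)
  finally show ?thesis .
qed

lemma lcs_dist_add_inner_lcs:
  "t < n \<Longrightarrow> j < m \<Longrightarrow> lcs_dist (Xs (t + 1)) (Ys (j + 1)) + 2 * inner_lcs t j = lx + ly"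
  using lcs_dist_add_LCS[of "Xs (t + 1)" "Ys (j + 1)"] Xs_props[of "t + 1"] Ys_props[of "j + 1"]
  unfolding inner_lcs_def by simp

lemma gamma_le: "gamma Xs Ys n m \<le> lx + ly"
  unfolding gamma_def
proof (rule Max.boundedI)
  have "{lcs_dist (Xs i) (Ys j) | i j. i \<in> {1..n} \<and> j \<in> {1..m}}
      = (\<lambda>(i, j). lcs_dist (Xs i) (Ys j)) ` ({1..n} \<times> {1..m})" by force
  thus "finite {lcs_dist (Xs i) (Ys j) | i j. i \<in> {1..n} \<and> j \<in> {1..m}}" by simp
  show "{lcs_dist (Xs i) (Ys j) | i j. i \<in> {1..n} \<and> j \<in> {1..m}} \<noteq> {}" using n_pos m_pos by auto
  fix d assume "d \<in> {lcs_dist (Xs i) (Ys j) | i j. i \<in> {1..n} \<and> j \<in> {1..m}}"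
  then obtain i j where "i \<in> {1..n}" "j \<in> {1..m}" "d = lcs_dist (Xs i) (Ys j)" by blast
  thus "d \<le> lx + ly" using Xs_props Ys_props by (auto simp: lcs_dist_def)
qed

lemma align_cost_structured:
  assumes "\<Delta> + m \<le> n"
  shows "align_cost Xs Ys n m {(\<Delta> + k, k) | k. k \<in> {1..m}}
      = (\<Sum>r<m. lcs_dist (Xs (\<Delta> + r + 1)) (Ys (r + 1)))"
proof -
  let ?f = "\<lambda>r. (\<Delta> + Suc r, Suc r)"
  have L: "{(\<Delta> + k, k) | k. k \<in> {1..m}} = ?f ` {..<m}"
    unfolding image_Suc_lessThan[symmetric] by auto
  have inj: "inj_on ?f {..<m}" by (rule inj_onI) simp
  have fst_L: "fst ` ?f ` {..<m} = (\<lambda>r. \<Delta> + Suc r) ` {..<m}" by (simp add: image_image)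
  have "\<Delta> + m \<in> (\<lambda>r. \<Delta> + Suc r) ` {..<m}"
    using m_pos by (intro image_eqI[of _ _ "m - 1"]) auto
  moreover have "\<Delta> + 1 \<in> (\<lambda>r. \<Delta> + Suc r) ` {..<m}"
    using m_pos by (intro image_eqI[of _ _ 0]) auto
  ultimately have "Max (fst ` ?f ` {..<m}) = \<Delta> + m" "Min (fst ` ?f ` {..<m}) = \<Delta> + 1"
    unfolding fst_L by (auto intro!: Max_eqI Min_eqI)
  then show ?thesis
    unfolding align_cost_def L sum.reindex[OF inj] card_image[OF inj] by simp
qed

lemma lcs_dist_le_structured_cost:
  assumes "L \<in> structured_alignments n m"
  shows "lcs_dist X Y \<le> align_cost Xs Ys n m L + 2 * n * k2"
proof -
  obtain \<Delta> where \<Delta>: "\<Delta> + m \<le> n" "L = {(\<Delta> + k, k) | k. k \<in> {1..m}}"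
    using assms m_le_n unfolding structured_alignments_def by (auto simp: le_diff_conv2)
  have "lcs_dist (Xs (\<Delta> + r + 1)) (Ys (r + 1)) + 2 * inner_lcs (\<Delta> + r) r = lx + ly" if "r < m" for r
    using lcs_dist_add_inner_lcs[of "\<Delta> + r" r] that \<Delta>(1) by simp
  then have "(\<Sum>r<m. lcs_dist (Xs (\<Delta> + r + 1)) (Ys (r + 1))) + 2 * (\<Sum>r<m. inner_lcs (\<Delta> + r) r)
      = (\<Sum>r<m. lx + ly)"
    by (simp add: sum_distrib_left sum.distrib[symmetric])
  thus ?thesis
    using lcs_dist_add_LCS[of X Y] length_X_add_length_Y LCS_ge_shifted[OF \<Delta>(1)]
      align_cost_structured[OF \<Delta>(1)] \<Delta>(2) by simp
qed

lemma LCS_X_Y_cut: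
  obtains c where "mono c"
    "LCS X Y = (\<Sum>t<n. LCS (GX t) (map ychar [c (2 * t)..<c (2 * t + 1)]))
      + (\<Sum>t<n - 1. LCS (replicate k2 \<mu>) (map ychar [c (2 * t + 1)..<c (2 * t + 2)]))"
proof -
  let ?C = "map ychar [0..<lenY]"
  obtain c where c: "mono c" "\<And>k. 2 * n - 1 \<le> k \<Longrightarrow> c k = length ?C"
    "LCS X ?C = (\<Sum>k<2 * n - 1. LCS (xpiece k) (drop (c k) (take (c (Suc k)) ?C)))"
    unfolding X_eq_concat_xpiece by (rule LCS_concat_left_split[of "2 * n - 1" ?C xpiece]) blast
  have "c k \<le> lenY" for k
    using monoD[OF c(1), of k "max k (2 * n - 1)"] c(2)[of "max k (2 * n - 1)"] by simp
  then have "drop (c k) (take (c (Suc k)) ?C) = map ychar [c k..<c (Suc k)]" for k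
    by (simp add: take_map drop_map min_def)
  then have "LCS X Y = (\<Sum>k<2 * n - 1. LCS (xpiece k) (map ychar [c k..<c (Suc k)]))"
    using c(3) unfolding Y_eq_map_ychar by simp
  also have "\<dots> = (\<Sum>t<n. LCS (GX t) (map ychar [c (2 * t)..<c (2 * t + 1)]))
      + (\<Sum>t<n - 1. LCS (replicate k2 \<mu>) (map ychar [c (2 * t + 1)..<c (2 * t + 2)]))"
    unfolding sum_even_odd_split[OF n_pos] by (simp add: xpiece_def)
  finally show ?thesis using that c(1) by blast
qed

end

section \<open>Cutting \<open>Y\<close> along an optimal common subsequence\<close>

text \<open>A monotone \<open>c\<close> cuts \<open>Y\<close> into consecutive segments, \<open>[c (2t), c (2t+1))\<close> for \<open>GX t\<close>
  and \<open>[c (2t+1), c (2t+2))\<close> for the separator following it. Block \<open>t\<close> of \<open>X\<close> meets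
  block \<open>j\<close> of \<open>Y\<close> if its segment overlaps \<open>GY j\<close>; the pairs that meet only each other
  form the alignment read off from the cut.\<close>

locale lcs_cut = lcs_reduction +
  fixes c :: "nat \<Rightarrow> nat"
  assumes mono_cut: "mono c"
begin

definition gx_start where "gx_start t = c (2 * t)"
definition gx_end where "gx_end t = c (2 * t + 1)"
definition lcs_gx where "lcs_gx t = LCS (GX t) (map ychar [gx_start t..<gx_end t])"
definition lcs_sep where "lcs_sep t = LCS (replicate k2 \<mu>) (map ychar [gx_end t..<gx_start (Suc t)])"

definition meets where
  "meets t j \<longleftrightarrow> (\<exists>q. gx_start t \<le> q \<and> q < gx_end t \<and> ystart j \<le> q \<and> q < ystart j + lenGY)"
definition matching where
  "matching = {(t, j). t < n \<and> j < m \<and> meets t j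
      \<and> (\<forall>j'<m. meets t j' \<longrightarrow> j' = j) \<and> (\<forall>t'<n. meets t' j \<longrightarrow> t' = t)}"
definition sep_in_block where
  "sep_in_block u \<longleftrightarrow> (\<exists>j<m. ystart j < gx_end u \<and> gx_start (Suc u) < ystart j + lenGY)"

lemma gx_start_le_end: "gx_start t \<le> gx_end t"
  unfolding gx_start_def gx_end_def using mono_cut by (simp add: monoD)

lemma gx_end_le_start: "t < t' \<Longrightarrow> gx_end t \<le> gx_start t'"
  unfolding gx_start_def gx_end_def using mono_cut by (simp add: monoD)

lemma gx_end_mono: "t \<le> t' \<Longrightarrow> gx_end t \<le> gx_end t'"
  unfolding gx_end_def using mono_cut by (simp add: monoD)

lemma gx_start_mono: "t \<le> t' \<Longrightarrow> gx_start t \<le> gx_start t'"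
  unfolding gx_start_def using mono_cut by (simp add: monoD)

lemma matching_iff:
  "(t, j) \<in> matching \<longleftrightarrow> t < n \<and> j < m \<and> meets t j
      \<and> (\<forall>j'<m. meets t j' \<longrightarrow> j' = j) \<and> (\<forall>t'<n. meets t' j \<longrightarrow> t' = t)"
  unfolding matching_def by simp

lemma matching_subset: "matching \<subseteq> {..<n} \<times> {..<m}"
  unfolding matching_def by auto

lemma finite_matching: "finite matching"
  using matching_subset by (rule finite_subset) simp

lemma inj_on_fst_matching: "inj_on fst matching"
proof (rule inj_onI)
  fix p p' assume "p \<in> matching" "p' \<in> matching" "fst p = fst p'"
  thus "p = p'" by (cases p, cases p') (simp add: matching_iff)
qed

lemma inj_on_snd_matching: "inj_on snd matching"
proof (rule inj_onI)
  fix p p' assume "p \<in> matching" "p' \<in> matching" "snd p = snd p'"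
  thus "p = p'" by (cases p, cases p') (simp add: matching_iff)
qed

lemma meets_mono: assumes "meets t j" "meets t' j'" "t < t'" shows "j \<le> j'"
proof (rule ccontr)
  assume "\<not> j \<le> j'"
  then have "ystart j' + lenGY + k2 \<le> ystart j" by (intro ystart_gap) simp
  moreover have "gx_end t \<le> gx_start t'" using assms(3) by (rule gx_end_le_start)
  moreover obtain q where "q < gx_end t" "ystart j \<le> q" using assms(1) unfolding meets_def by blast
  moreover obtain q' where "gx_start t' \<le> q'" "q' < ystart j' + lenGY"
    using assms(2) unfolding meets_def by blast
  ultimately show False by linarith
qed

lemma matching_order:
  assumes "(t, j) \<in> matching" "(t', j') \<in> matching" "t < t'" shows "j < j'"
proof -
  have "j \<le> j'" using meets_mono[of t j t' j'] assms by (simp add: matching_iff)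
  moreover have "j \<noteq> j'" using assms inj_onD[OF inj_on_snd_matching, of "(t, j)" "(t', j')"] by auto
  ultimately show ?thesis by simp
qed

lemma in_block_meets:
  assumes "gx_start t \<le> q" "q < gx_end t" "in_block q"
  obtains j where "j < m" "meets t j" "ystart j \<le> q" "q < ystart j + lenGY"
proof -
  from assms(3) obtain j i where ji: "j < m" "i < lenGY" "q = ystart j + i" by (rule in_blockE)
  then have "meets t j" unfolding meets_def using assms(1,2) by (intro exI[of _ q]) simp
  thus ?thesis using that[of j] ji by simp
qed

lemma lcs_gx_le_k2: "t < n \<Longrightarrow> lcs_gx t \<le> k2"
  unfolding lcs_gx_def by (rule LCS_GX_le_k2)

lemma lcs_gx_le_block_count: "t < n \<Longrightarrow> lcs_gx t \<le> block_count (gx_start t) (gx_end t)"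
  unfolding lcs_gx_def by (rule LCS_GX_le_block_count)

lemma lcs_sep_le_k2: "lcs_sep t \<le> k2"
  unfolding lcs_sep_def by (rule LCS_sep_le_k2)

lemma lcs_sep_le_gap_count: "lcs_sep t \<le> gap_count (gx_end t) (gx_start (Suc t))"
  unfolding lcs_sep_def by (rule LCS_sep_le_gap_count)

lemma lcs_gx_matching:
  assumes tj: "(t, j) \<in> matching" shows "lcs_gx t \<le> 2 * k1 + inner_lcs t j"
  unfolding lcs_gx_def
proof (rule LCS_GX_segment_le)
  show "t < n" "j < m" using tj by (simp_all add: matching_iff)
  fix q assume "gx_start t \<le> q" "q < gx_end t" "in_block q"
  then obtain j' where "j' < m" "meets t j'" "ystart j' \<le> q" "q < ystart j' + lenGY"
    by (rule in_block_meets)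
  moreover from this have "j' = j" using tj by (simp add: matching_iff)
  ultimately show "ystart j \<le> q \<and> q < ystart j + lenGY" by simp
qed

lemma lcs_gx_eq_0:
  assumes "t < n" "\<And>j. j < m \<Longrightarrow> \<not> meets t j" shows "lcs_gx t = 0"
proof -
  have "\<not> in_block q" if "gx_start t \<le> q" "q < gx_end t" for q
    using assms(2) that by (meson in_block_meets)
  then have "{q. gx_start t \<le> q \<and> q < gx_end t \<and> in_block q} = {}" by blast
  then have "block_count (gx_start t) (gx_end t) = 0" unfolding block_count_def by simp
  thus ?thesis using lcs_gx_le_block_count[OF assms(1)] by simp
qed

lemma lcs_sep_eq_0:
  assumes "sep_in_block u" shows "lcs_sep u = 0"
proof -
  from assms obtain j where j: "j < m" "ystart j < gx_end u" "gx_start (Suc u) < ystart j + lenGY"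
    unfolding sep_in_block_def by blast
  have "in_block q" if "gx_end u \<le> q" "q < gx_start (Suc u)" for q
    unfolding in_block_def using j that by (intro exI[of _ j]) simp
  then have "{q. gx_end u \<le> q \<and> q < gx_start (Suc u) \<and> \<not> in_block q} = {}" by blast
  then have "gap_count (gx_end u) (gx_start (Suc u)) = 0" unfolding gap_count_def by simp
  thus ?thesis using lcs_sep_le_gap_count[of u] by simp
qed

lemma sep_in_block_between:
  assumes "meets t j" "meets t' j" "j < m" "t \<le> u" "u < t'"
  shows "sep_in_block u"
proof -
  obtain q where "ystart j \<le> q" "q < gx_end t" using assms(1) unfolding meets_def by blast
  moreover obtain q' where "gx_start t' \<le> q'" "q' < ystart j + lenGY"
    using assms(2) unfolding meets_def by blast
  moreover have "gx_end t \<le> gx_end u" "gx_start (Suc u) \<le> gx_start t'"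
    using assms(4,5) by (simp_all add: gx_end_mono gx_start_mono)
  ultimately show ?thesis unfolding sep_in_block_def using assms(3) by (intro exI[of _ j]) simp
qed

lemma matching_if_single_meet:
  assumes "u < n" "j < m" "meets u j" "\<And>j'. j' < m \<Longrightarrow> meets u j' \<Longrightarrow> j' = j"
    and "u = 0 \<or> \<not> sep_in_block (u - 1)" "Suc u = n \<or> \<not> sep_in_block u"
  shows "(u, j) \<in> matching"
proof -
  have "t' = u" if "t' < n" "meets t' j" for t'
  proof (rule ccontr)
    assume "t' \<noteq> u"
    then consider "t' < u" | "u < t'" by linarith
    thus False
    proof cases
      case 1
      then have "sep_in_block (u - 1)"
        using sep_in_block_between[OF that(2) assms(3,2), of "u - 1"] by simp
      thus False using assms(5) 1 by simp
    next
      case 2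
      then have "sep_in_block u"
        using sep_in_block_between[OF assms(3) that(2) assms(2), of u] by simp
      thus False using assms(6) 2 that(1) by simp
    qed
  qed
  thus ?thesis unfolding matching_iff using assms(1-4) by blast
qed

text \<open>If only block \<open>j\<close> of \<open>Y\<close> is met, the segments of \<open>T\<close> share its \<open>lenGY\<close> letters.\<close>

lemma sum_lcs_gx_le_lenGY:
  assumes "T \<subseteq> {..<n}" "\<And>t j'. t \<in> T \<Longrightarrow> j' < m \<Longrightarrow> meets t j' \<Longrightarrow> j' = j"
  shows "(\<Sum>t\<in>T. lcs_gx t) \<le> lenGY"
proof -
  define A where "A t = {q. gx_start t \<le> q \<and> q < gx_end t \<and> ystart j \<le> q \<and> q < ystart j + lenGY}" for t
  have finite_A: "finite (A t)" for t unfolding A_def by (rule finite_subset[of _ "{..<gx_end t}"]) auto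
  have "lcs_gx t \<le> card (A t)" if "t \<in> T" for t
  proof -
    have "{q. gx_start t \<le> q \<and> q < gx_end t \<and> in_block q} \<subseteq> A t"
    proof
      fix q assume "q \<in> {q. gx_start t \<le> q \<and> q < gx_end t \<and> in_block q}"
      then have q: "gx_start t \<le> q" "q < gx_end t" "in_block q" by simp_all
      then obtain j' where "j' < m" "meets t j'" "ystart j' \<le> q" "q < ystart j' + lenGY"
        by (rule in_block_meets)
      thus "q \<in> A t" using assms(2)[OF that] q unfolding A_def by auto
    qed
    then have "block_count (gx_start t) (gx_end t) \<le> card (A t)"
      unfolding block_count_def by (rule card_mono[OF finite_A])
    thus ?thesis using lcs_gx_le_block_count[of t] assms(1) that by force
  qed
  then have "(\<Sum>t\<in>T. lcs_gx t) \<le> (\<Sum>t\<in>T. card (A t))" by (rule sum_mono)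
  also have "\<dots> = card (\<Union>t\<in>T. A t)"
  proof (rule card_UN_disjoint[symmetric])
    show "finite T" using assms(1) finite_subset by blast
    have "A t \<inter> A t' = {}" if "t < t'" for t t'
      using gx_end_le_start[OF that] unfolding A_def by auto
    thus "\<forall>t\<in>T. \<forall>t'\<in>T. t \<noteq> t' \<longrightarrow> A t \<inter> A t' = {}"
      by (metis Int_commute neq_iff)
  qed (simp add: finite_A)
  also have "\<dots> \<le> card {ystart j..<ystart j + lenGY}" by (rule card_mono) (auto simp: A_def)
  finally show ?thesis by simp
qed

definition blocks_between where "blocks_between lo hi = {j. j < m \<and> lo \<le> ystart j \<and> ystart j < hi}"
definition prefix_end where "prefix_end u = (if u = 0 then 0 else gx_end (u - 1))"

lemma prefix_end_mono: "u \<le> u' \<Longrightarrow> prefix_end u \<le> prefix_end u'"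
  unfolding prefix_end_def by (auto intro: gx_end_mono)

lemma card_blocks_between_le: "card (blocks_between lo hi) \<le> m"
  using card_mono[of "{..<m}" "blocks_between lo hi"] unfolding blocks_between_def by auto

lemma card_blocks_between_split:
  assumes "lo \<le> mid" "mid \<le> hi"
  shows "card (blocks_between lo hi) = card (blocks_between lo mid) + card (blocks_between mid hi)"
proof -
  have "blocks_between lo hi = blocks_between lo mid \<union> blocks_between mid hi"
    using assms unfolding blocks_between_def by auto
  moreover have "blocks_between lo mid \<inter> blocks_between mid hi = {}"
    unfolding blocks_between_def by auto
  ultimately show ?thesis by (simp add: card_Un_disjoint blocks_between_def)
qed

lemma meets_in_blocks_between:
  assumes "u0 = 0 \<or> \<not> sep_in_block (u0 - 1)" "u0 \<le> t" "t < u" "meets t j" "j < m"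
  shows "j \<in> blocks_between (prefix_end u0) (prefix_end u)"
proof -
  obtain q where q: "gx_start t \<le> q" "q < gx_end t" "ystart j \<le> q" "q < ystart j + lenGY"
    using assms(4) unfolding meets_def by blast
  have "gx_end t \<le> gx_end (u - 1)" using assms(3) by (intro gx_end_mono) simp
  then have "ystart j < prefix_end u" using q assms(3) unfolding prefix_end_def by simp
  moreover have "prefix_end u0 \<le> ystart j"
  proof (rule ccontr)
    assume "\<not> prefix_end u0 \<le> ystart j"
    then have "u0 \<noteq> 0" "ystart j < gx_end (u0 - 1)" unfolding prefix_end_def by (auto split: if_splits)
    moreover have "gx_start (Suc (u0 - 1)) < ystart j + lenGY"
      using q gx_start_mono[of u0 t] assms(2) \<open>u0 \<noteq> 0\<close> by simp
    ultimately have "sep_in_block (u0 - 1)" unfolding sep_in_block_def using assms(5) by blast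
    thus False using assms(1) \<open>u0 \<noteq> 0\<close> by simp
  qed
  ultimately show ?thesis using assms(5) unfolding blocks_between_def by simp
qed

text \<open>A run of blocks of \<open>X\<close> whose segments meet only \<open>GY j\<close>: a single block is matched
  with it, several blocks share its \<open>lenGY \<le> k2 + 2 k1\<close> letters.\<close>

lemma sum_lcs_gx_run_one_block:
  assumes run: "u0 < u" "u \<le> n"
    and ends: "u0 = 0 \<or> \<not> sep_in_block (u0 - 1)" "u = n \<or> \<not> sep_in_block (u - 1)"
    and j: "j < m" "t0 \<in> {u0..<u}" "meets t0 j"
    and only_j: "\<And>t j'. t \<in> {u0..<u} \<Longrightarrow> j' < m \<Longrightarrow> meets t j' \<Longrightarrow> j' = j"
  shows "(\<Sum>t\<in>{u0..<u}. lcs_gx t) \<le> (u - u0 - 1) * k2 + 2 * k1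
      + (\<Sum>p\<in>{p\<in>matching. u0 \<le> fst p \<and> fst p < u}. inner_lcs (fst p) (snd p))"
proof (cases "u = Suc u0")
  case True
  have "j' = j" if "j' < m" "meets u0 j'" for j'
    using only_j[of u0 j'] that run by simp
  moreover have "meets u0 j" using j True by simp
  ultimately have "(u0, j) \<in> matching"
    using matching_if_single_meet[OF _ j(1)] run ends True by simp
  then have "inner_lcs u0 j \<le> (\<Sum>p\<in>{p\<in>matching. u0 \<le> fst p \<and> fst p < u}. inner_lcs (fst p) (snd p))"
    using member_le_sum[of "(u0, j)" "{p\<in>matching. u0 \<le> fst p \<and> fst p < u}"
        "\<lambda>p. inner_lcs (fst p) (snd p)"] True finite_matching by simp
  thus ?thesis using True lcs_gx_matching[OF \<open>(u0, j) \<in> matching\<close>] by simp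
next
  case False
  have "(\<Sum>t\<in>{u0..<u}. lcs_gx t) \<le> lenGY" by (rule sum_lcs_gx_le_lenGY) (use run only_j in auto)
  moreover have "1 \<le> u - u0 - 1" using False run by simp
  then have "k2 \<le> (u - u0 - 1) * k2" by simp
  ultimately show ?thesis using lenGY_le by linarith
qed

text \<open>Split on the blocks of \<open>Y\<close> met by the run: none, one, or at least two, which are paid for
  by \<open>2 k1\<close> each since \<open>k2 \<le> 4 k1\<close>.\<close>

lemma sum_lcs_gx_run:
  assumes run: "u0 < u" "u \<le> n"
    and ends: "u0 = 0 \<or> \<not> sep_in_block (u0 - 1)" "u = n \<or> \<not> sep_in_block (u - 1)"
  shows "(\<Sum>t\<in>{u0..<u}. lcs_gx t) \<le> (u - u0 - 1) * k2
      + 2 * k1 * card (blocks_between (prefix_end u0) (prefix_end u))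
      + (\<Sum>p\<in>{p\<in>matching. u0 \<le> fst p \<and> fst p < u}. inner_lcs (fst p) (snd p))"
    (is "?S \<le> _")
proof -
  define Q where "Q = {j. j < m \<and> (\<exists>t\<in>{u0..<u}. meets t j)}"
  define B where "B = blocks_between (prefix_end u0) (prefix_end u)"
  have "Q \<subseteq> B"
  proof
    fix j assume "j \<in> Q"
    then obtain t where "u0 \<le> t" "t < u" "meets t j" "j < m" unfolding Q_def by auto
    thus "j \<in> B" unfolding B_def by (rule meets_in_blocks_between[OF ends(1)])
  qed
  moreover have "finite B" unfolding B_def blocks_between_def by simp
  ultimately have card_QB: "card Q \<le> card B" by (rule card_mono[rotated])
  have "card Q = 0 \<or> card Q = 1 \<or> 2 \<le> card Q" by arith
  then consider "Q = {}" | j where "Q = {j}" | "2 \<le> card Q"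
    by (auto simp: card_1_singleton_iff Q_def)
  then show ?thesis
  proof cases
    case 1
    have "lcs_gx t = 0" if "t \<in> {u0..<u}" for t
      using that run 1 by (intro lcs_gx_eq_0) (auto simp: Q_def)
    thus ?thesis by simp
  next
    case (2 j)
    then obtain t0 where "j < m" "t0 \<in> {u0..<u}" "meets t0 j" unfolding Q_def by blast
    moreover have "j' = j" if "t \<in> {u0..<u}" "j' < m" "meets t j'" for t j'
      using 2 that unfolding Q_def by blast
    ultimately have "?S \<le> (u - u0 - 1) * k2 + 2 * k1
        + (\<Sum>p\<in>{p\<in>matching. u0 \<le> fst p \<and> fst p < u}. inner_lcs (fst p) (snd p))"
      using run ends by (intro sum_lcs_gx_run_one_block) blast+
    moreover have "2 * k1 \<le> 2 * k1 * card B" using 2 card_QB by simp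
    ultimately show ?thesis unfolding B_def by linarith
  next
    case 3
    have "?S \<le> (\<Sum>t\<in>{u0..<u}. k2)" using run by (intro sum_mono lcs_gx_le_k2) auto
    also have "\<dots> = (u - u0 - 1) * k2 + k2" using run by (simp add: mult_eq_if)
    also have "\<dots> \<le> (u - u0 - 1) * k2 + 2 * k1 * 2" using k2_le by simp
    finally have "?S \<le> (u - u0 - 1) * k2 + 2 * k1 * 2" .
    moreover have "2 * k1 * 2 \<le> 2 * k1 * card B" using 3 card_QB by (intro mult_le_mono2) simp
    ultimately show ?thesis unfolding B_def by linarith
  qed
qed

lemma sum_lcs_sep_le_from:
  assumes "1 \<le> u0" "u0 < u" "\<And>t. u0 \<le> t \<Longrightarrow> t < u - 1 \<Longrightarrow> sep_in_block t"
  shows "(\<Sum>t<u - 1. lcs_sep t) \<le> (\<Sum>t<u0 - 1. lcs_sep t) + k2"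
proof -
  have "(\<Sum>t\<in>{u0..<u - 1}. lcs_sep t) = 0" using assms(3) lcs_sep_eq_0 by simp
  moreover have "(\<Sum>t<u - 1. lcs_sep t) = (\<Sum>t<u0 - 1. lcs_sep t) + (\<Sum>t\<in>{u0 - 1..<u - 1}. lcs_sep t)"
    using assms by (intro sum_lessThan_split) simp
  moreover have "(\<Sum>t\<in>{u0 - 1..<u - 1}. lcs_sep t) = lcs_sep (u0 - 1) + (\<Sum>t\<in>{u0..<u - 1}. lcs_sep t)"
    using assms sum.atLeast_Suc_lessThan[of "u0 - 1" "u - 1" lcs_sep] by simp
  ultimately show ?thesis using lcs_sep_le_k2[of "u0 - 1"] by simp
qed

lemma sum_inner_lcs_split:
  assumes "u0 \<le> u"
  shows "(\<Sum>p\<in>{p\<in>matching. fst p < u}. inner_lcs (fst p) (snd p))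
    = (\<Sum>p\<in>{p\<in>matching. fst p < u0}. inner_lcs (fst p) (snd p))
      + (\<Sum>p\<in>{p\<in>matching. u0 \<le> fst p \<and> fst p < u}. inner_lcs (fst p) (snd p))"
proof -
  have "{p\<in>matching. fst p < u} = {p\<in>matching. fst p < u0} \<union> {p\<in>matching. u0 \<le> fst p \<and> fst p < u}"
    using assms by auto
  thus ?thesis using finite_matching by (simp add: sum.union_disjoint[symmetric] Int_def)
qed

text \<open>Induction over the separators not swallowed by a block of \<open>Y\<close>: they cut the prefix
  into runs, each run paying one \<open>k2\<close> less than its length and each cutting separator
  at most \<open>k2\<close>.\<close>

lemma prefix_bound:
  assumes "1 \<le> u" "u \<le> n" "u = n \<or> \<not> sep_in_block (u - 1)"
  shows "(\<Sum>t<u. lcs_gx t) + (\<Sum>t<u - 1. lcs_sep t) \<le> (u - 1) * k2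
      + 2 * k1 * card (blocks_between 0 (prefix_end u))
      + (\<Sum>p\<in>{p\<in>matching. fst p < u}. inner_lcs (fst p) (snd p))"
  using assms
proof (induction u rule: less_induct)
  case (less u)
  define V where "V = {v. 1 \<le> v \<and> v < u \<and> \<not> sep_in_block (v - 1)}"
  have finite_V: "finite V" unfolding V_def by (rule finite_subset[of _ "{..<u}"]) auto
  show ?case
  proof (cases "V = {}")
    case True
    have "lcs_sep t = 0" if "t < u - 1" for t
    proof (rule lcs_sep_eq_0, rule ccontr)
      assume "\<not> sep_in_block t"
      then have "Suc t \<in> V" unfolding V_def using that by simp
      thus False using True by simp
    qed
    moreover have "(\<Sum>t\<in>{0..<u}. lcs_gx t) \<le> (u - 0 - 1) * k2
        + 2 * k1 * card (blocks_between (prefix_end 0) (prefix_end u))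
        + (\<Sum>p\<in>{p\<in>matching. 0 \<le> fst p \<and> fst p < u}. inner_lcs (fst p) (snd p))"
      using less.prems by (intro sum_lcs_gx_run) auto
    ultimately show ?thesis by (simp add: lessThan_atLeast0 prefix_end_def)
  next
    case False
    define u0 where "u0 = Max V"
    have "u0 \<in> V" unfolding u0_def using finite_V False by (rule Max_in)
    then have u0: "1 \<le> u0" "u0 < u" "\<not> sep_in_block (u0 - 1)" unfolding V_def by auto
    have IH: "(\<Sum>t<u0. lcs_gx t) + (\<Sum>t<u0 - 1. lcs_sep t) \<le> (u0 - 1) * k2
        + 2 * k1 * card (blocks_between 0 (prefix_end u0))
        + (\<Sum>p\<in>{p\<in>matching. fst p < u0}. inner_lcs (fst p) (snd p))"
      using less.IH[of u0] u0 less.prems(2) by simp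
    have run: "(\<Sum>t\<in>{u0..<u}. lcs_gx t) \<le> (u - u0 - 1) * k2
        + 2 * k1 * card (blocks_between (prefix_end u0) (prefix_end u))
        + (\<Sum>p\<in>{p\<in>matching. u0 \<le> fst p \<and> fst p < u}. inner_lcs (fst p) (snd p))"
      using u0 less.prems by (intro sum_lcs_gx_run) auto
    have "sep_in_block t" if "u0 \<le> t" "t < u - 1" for t
    proof (rule ccontr)
      assume "\<not> sep_in_block t"
      then have "Suc t \<in> V" unfolding V_def using that by simp
      thus False using Max_ge[OF finite_V, of "Suc t"] that unfolding u0_def by simp
    qed
    then have seps: "(\<Sum>t<u - 1. lcs_sep t) \<le> (\<Sum>t<u0 - 1. lcs_sep t) + k2"
      using u0 by (intro sum_lcs_sep_le_from) simp_all
    have "card (blocks_between 0 (prefix_end u)) = card (blocks_between 0 (prefix_end u0))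
        + card (blocks_between (prefix_end u0) (prefix_end u))"
      using u0 by (intro card_blocks_between_split prefix_end_mono) simp_all
    moreover note sum_inner_lcs_split[OF less_imp_le[OF u0(2)]]
    moreover have "(u0 - 1) * k2 + k2 + (u - u0 - 1) * k2 = (u - 1) * k2"
    proof -
      have "u0 - 1 + 1 + (u - u0 - 1) = u - 1" using u0 by simp
      thus ?thesis by (metis add_mult_distrib mult_1)
    qed
    ultimately show ?thesis
      using IH run seps sum_lessThan_split[of u0 u lcs_gx] u0 by (simp add: add_mult_distrib2)
  qed
qed

lemma total_bound:
  "(\<Sum>t<n. lcs_gx t) + (\<Sum>t<n - 1. lcs_sep t)
    \<le> (n - 1) * k2 + 2 * k1 * m + (\<Sum>p\<in>matching. inner_lcs (fst p) (snd p))"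
proof -
  have "{p\<in>matching. fst p < n} = matching" using matching_subset by auto
  moreover have "(\<Sum>t<n. lcs_gx t) + (\<Sum>t<n - 1. lcs_sep t) \<le> (n - 1) * k2
      + 2 * k1 * card (blocks_between 0 (prefix_end n))
      + (\<Sum>p\<in>{p\<in>matching. fst p < n}. inner_lcs (fst p) (snd p))"
    using n_pos by (intro prefix_bound) auto
  ultimately have "(\<Sum>t<n. lcs_gx t) + (\<Sum>t<n - 1. lcs_sep t) \<le> (n - 1) * k2
      + 2 * k1 * card (blocks_between 0 (prefix_end n)) + (\<Sum>p\<in>matching. inner_lcs (fst p) (snd p))"
    by simp
  moreover have "2 * k1 * card (blocks_between 0 (prefix_end n)) \<le> 2 * k1 * m"
    using card_blocks_between_le by (rule mult_le_mono2)
  ultimately show ?thesis by linarith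
qed

lemma matching_partner:
  assumes "card matching = m" "j < m" obtains t where "(t, j) \<in> matching"
proof -
  have "snd ` matching = {..<m}"
    using matching_subset card_image[OF inj_on_snd_matching] assms(1) by (intro card_subset_eq) auto
  then obtain p where "p \<in> matching" "j = snd p" using assms(2) by (metis imageE lessThan_iff)
  thus ?thesis using that[of "fst p"] by simp
qed

text \<open>When every block of \<open>Y\<close> is matched, an unmatched block of \<open>X\<close> meets no block at all.\<close>

lemma sum_lcs_gx_full_matching:
  assumes "card matching = m"
  shows "(\<Sum>t<n. lcs_gx t) \<le> 2 * k1 * m + (\<Sum>p\<in>matching. inner_lcs (fst p) (snd p))"
proof -
  have "lcs_gx t = 0" if t: "t < n" "t \<notin> fst ` matching" for t
  proof (rule lcs_gx_eq_0[OF t(1)])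
    fix j assume "j < m"
    then obtain t' where t': "(t', j) \<in> matching" by (rule matching_partner[OF assms])
    show "\<not> meets t j"
    proof
      assume "meets t j"
      then have "t = t'" using t' t(1) by (simp add: matching_iff)
      thus False using t(2) t' by force
    qed
  qed
  then have "(\<Sum>t<n. lcs_gx t) = (\<Sum>t\<in>fst ` matching. lcs_gx t)"
    using matching_subset by (intro sum.mono_neutral_right) auto
  also have "\<dots> = (\<Sum>p\<in>matching. lcs_gx (fst p))"
    by (rule sum.reindex[OF inj_on_fst_matching, unfolded comp_def])
  also have "\<dots> \<le> (\<Sum>p\<in>matching. 2 * k1 + inner_lcs (fst p) (snd p))"
    by (rule sum_mono) (use lcs_gx_matching in force)
  finally show ?thesis using assms by (simp add: sum.distrib mult.commute)
qed

lemma matching_enumeration: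
  assumes "card matching = m"
  obtains f where "\<And>j. j < m \<Longrightarrow> (f j, j) \<in> matching" "fst ` matching = f ` {..<m}"
    "\<And>j j'. j < j' \<Longrightarrow> j' < m \<Longrightarrow> f j < f j'"
proof -
  have "\<forall>j<m. \<exists>t. (t, j) \<in> matching" using matching_partner[OF assms] by metis
  then obtain f where f: "\<And>j. j < m \<Longrightarrow> (f j, j) \<in> matching" by metis
  have "matching = (\<lambda>j. (f j, j)) ` {..<m}"
  proof (intro equalityI subsetI)
    fix p assume p: "p \<in> matching"
    obtain t j where tj: "p = (t, j)" by fastforce
    then have "j < m" using p matching_subset by auto
    then have "(f j, j) = p" using inj_onD[OF inj_on_snd_matching, of "(f j, j)" p] f[of j] p tj by simp
    thus "p \<in> (\<lambda>j. (f j, j)) ` {..<m}" using \<open>j < m\<close> by blast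
  qed (use f in auto)
  then have "fst ` matching = f ` {..<m}" by (simp add: image_image)
  moreover have "f j < f j'" if "j < j'" "j' < m" for j j'
  proof -
    have "f j \<noteq> f j'"
    proof
      assume "f j = f j'"
      then have "(f j, j) = (f j', j')"
        using inj_onD[OF inj_on_fst_matching, of "(f j, j)" "(f j', j')"] f[of j] f[of j'] that by simp
      thus False using that by simp
    qed
    moreover have "\<not> f j' < f j" using matching_order[OF f f, of j' j] that by auto
    ultimately show ?thesis by simp
  qed
  ultimately show ?thesis using that f by blast
qed

text \<open>Otherwise the matched blocks of \<open>X\<close>, listed in the order of their partners, would be
  consecutive and span exactly \<open>m\<close> positions.\<close>

lemma matching_gap:
  assumes "card matching = m" "m < Max (fst ` matching) + 1 - Min (fst ` matching)"
  obtains t t' j where "(t, j) \<in> matching" "(t', Suc j) \<in> matching" "Suc t < t'"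
proof -
  obtain f where f: "\<And>j. j < m \<Longrightarrow> (f j, j) \<in> matching"
    and fst_matching: "fst ` matching = f ` {..<m}"
    and f_less: "\<And>j j'. j < j' \<Longrightarrow> j' < m \<Longrightarrow> f j < f j'"
    by (rule matching_enumeration[OF assms(1)]) blast
  have "\<exists>j. Suc j < m \<and> Suc (f j) < f (Suc j)"
  proof (rule ccontr)
    assume no_gap: "\<not> ?thesis"
    have f_Suc: "f (Suc j) = Suc (f j)" if "Suc j < m" for j
      using no_gap f_less[of j "Suc j"] that by fastforce
    have f_eq: "f j = f 0 + j" if "j < m" for j
      using that by (induction j) (simp_all add: f_Suc)
    have "Max (f ` {..<m}) = f 0 + (m - 1)"
    proof (rule Max_eqI)
      show "f 0 + (m - 1) \<in> f ` {..<m}"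
        using m_pos f_eq[of "m - 1"] by (intro image_eqI[of _ _ "m - 1"]) simp_all
      fix y assume "y \<in> f ` {..<m}"
      then obtain j where "j < m" "y = f j" by blast
      thus "y \<le> f 0 + (m - 1)" using f_eq[of j] by simp
    qed simp
    moreover have "Min (f ` {..<m}) = f 0"
    proof (rule Min_eqI)
      show "f 0 \<in> f ` {..<m}" using m_pos by simp
      fix y assume "y \<in> f ` {..<m}"
      then obtain j where "j < m" "y = f j" by blast
      thus "f 0 \<le> y" using f_eq[of j] by simp
    qed simp
    ultimately show False using assms(2) m_pos unfolding fst_matching by simp
  qed
  thus ?thesis using that f by (metis Suc_lessD)
qed

text \<open>The separators right after \<open>GX t\<close> and right before \<open>GX t'\<close> can only use \<open>\<mu>\<close>'s of the
  single run between \<open>GY j\<close> and \<open>GY (j+1)\<close>.\<close>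

lemma lcs_sep_gap_pair:
  assumes "(t, j) \<in> matching" "(t', Suc j) \<in> matching" "Suc t < t'"
  shows "lcs_sep t + lcs_sep (t' - 1) \<le> k2"
proof -
  obtain qa where qa: "ystart j \<le> qa" "qa < gx_end t"
    using assms(1) unfolding matching_iff meets_def by blast
  obtain qb where qb: "gx_start t' \<le> qb" "qb < ystart (Suc j) + lenGY"
    using assms(2) unfolding matching_iff meets_def by blast
  have Suc_j: "Suc j < m" using assms(2) by (simp add: matching_iff)
  define I where "I u = {q. gx_end u \<le> q \<and> q < gx_start (Suc u) \<and> \<not> in_block q}" for u
  have finite_I: "finite (I u)" for u
    by (rule finite_subset[of _ "{..<gx_start (Suc u)}"]) (auto simp: I_def)
  have "gx_start (Suc t) \<le> gx_start (t' - 1)" "gx_start (t' - 1) \<le> gx_end (t' - 1)"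
    using assms(3) by (simp_all add: gx_start_mono gx_start_le_end)
  then have disjoint: "I t \<inter> I (t' - 1) = {}" unfolding I_def by auto
  have "I t \<union> I (t' - 1) \<subseteq> {ystart j + lenGY..<ystart (Suc j)}"
  proof
    fix q assume q: "q \<in> I t \<union> I (t' - 1)"
    have "gx_end t \<le> gx_end (t' - 1)" "gx_start (Suc t) \<le> gx_start t'"
      "gx_start (Suc (t' - 1)) = gx_start t'"
      using assms(3) by (simp_all add: gx_end_mono gx_start_mono)
    then have "ystart j \<le> q" "q < ystart (Suc j) + lenGY" "\<not> in_block q"
      using q qa qb unfolding I_def by auto
    thus "q \<in> {ystart j + lenGY..<ystart (Suc j)}" by (rule gap_between_blocks[OF Suc_j])
  qed
  then have "card (I t \<union> I (t' - 1)) \<le> card {ystart j + lenGY..<ystart (Suc j)}"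
    by (intro card_mono) simp_all
  then have "card (I t) + card (I (t' - 1)) \<le> k2"
    using card_Un_disjoint[OF finite_I finite_I disjoint] ystart_Suc[of j] by simp
  moreover have "lcs_sep u \<le> card (I u)" for u
    using lcs_sep_le_gap_count[of u] unfolding gap_count_def I_def .
  ultimately show ?thesis using add_le_mono order_trans by blast
qed

lemma penalty_bound:
  assumes "card matching = m" "m < Max (fst ` matching) + 1 - Min (fst ` matching)"
  shows "(\<Sum>t<n. lcs_gx t) + (\<Sum>t<n - 1. lcs_sep t) + k2
    \<le> (n - 1) * k2 + 2 * k1 * m + (\<Sum>p\<in>matching. inner_lcs (fst p) (snd p))"
proof -
  obtain t t' j where tj: "(t, j) \<in> matching" "(t', Suc j) \<in> matching" "Suc t < t'"
    using matching_gap[OF assms] .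
  then have t': "t' < n" using matching_subset by auto
  define S where "S = {..<n - 1} - {t, t' - 1}"
  have pair: "{t, t' - 1} \<subseteq> {..<n - 1}" "t \<noteq> t' - 1" using tj(3) t' by auto
  have "(\<Sum>u<n - 1. lcs_sep u) = lcs_sep t + lcs_sep (t' - 1) + (\<Sum>u\<in>S. lcs_sep u)"
    using sum.subset_diff[OF pair(1), of lcs_sep] pair(2) unfolding S_def by simp
  also have "\<dots> \<le> k2 + card S * k2"
    using lcs_sep_gap_pair[OF tj] sum_bounded_above[of S lcs_sep k2, OF lcs_sep_le_k2]
    by (simp add: add_mono)
  also have "card S = n - 3" using pair unfolding S_def by (simp add: card_Diff_subset)
  finally have "(\<Sum>u<n - 1. lcs_sep u) \<le> k2 + (n - 3) * k2" .
  moreover have "k2 + (n - 3) * k2 + k2 = (n - 1) * k2"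
  proof -
    have "1 + (n - 3) + 1 = n - 1" using t' tj(3) by simp
    thus ?thesis by (metis add_mult_distrib mult_1)
  qed
  ultimately have "(\<Sum>u<n - 1. lcs_sep u) + k2 \<le> (n - 1) * k2" by linarith
  thus ?thesis using sum_lcs_gx_full_matching[OF assms(1)] by linarith
qed

definition alignment where "alignment = (\<lambda>(t, j). (Suc t, Suc j)) ` matching"

lemma alignmentE:
  assumes "p \<in> alignment" obtains t j where "(t, j) \<in> matching" "p = (Suc t, Suc j)"
  using assms unfolding alignment_def by auto

lemma subset_alignment_in_alignments:
  assumes L: "L \<subseteq> alignment" shows "L \<in> alignments n m"
proof (rule chain_in_alignments)
  show "finite L" using L finite_matching finite_subset unfolding alignment_def by blast
  show "\<forall>p\<in>L. \<forall>q\<in>L. fst p < fst q \<longrightarrow> snd p < snd q"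
  proof (intro ballI impI)
    fix p q assume "p \<in> L" "q \<in> L" and less: "fst p < fst q"
    then have "p \<in> alignment" "q \<in> alignment" using L by blast+
    then obtain t j t' j' where "(t, j) \<in> matching" "(t', j') \<in> matching"
      "p = (Suc t, Suc j)" "q = (Suc t', Suc j')" by (metis alignmentE)
    thus "snd p < snd q" using matching_order less by simp
  qed
  show "inj_on fst L"
  proof (rule inj_onI)
    fix p q assume "p \<in> L" "q \<in> L" and eq: "fst p = fst q"
    then have "p \<in> alignment" "q \<in> alignment" using L by blast+
    then obtain t j t' j' where "(t, j) \<in> matching" "(t', j') \<in> matching"
      "p = (Suc t, Suc j)" "q = (Suc t', Suc j')" by (metis alignmentE)
    thus "p = q" using inj_onD[OF inj_on_fst_matching, of "(t, j)" "(t', j')"] eq by simp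
  qed
  show "L \<subseteq> {1..n} \<times> {1..m}"
  proof
    fix p assume "p \<in> L"
    then have "p \<in> alignment" using L by blast
    then obtain t j where "(t, j) \<in> matching" "p = (Suc t, Suc j)" by (rule alignmentE)
    thus "p \<in> {1..n} \<times> {1..m}" using matching_subset by auto
  qed
qed

lemma card_alignment: "card alignment = card matching"
  unfolding alignment_def by (rule card_image[OF inj_on_Suc_pair])

lemma sum_lcs_dist_alignment:
  "(\<Sum>(i, j)\<in>alignment. lcs_dist (Xs i) (Ys j)) + 2 * (\<Sum>p\<in>matching. inner_lcs (fst p) (snd p))
    = card matching * (lx + ly)"
proof -
  have "(\<Sum>(i, j)\<in>alignment. lcs_dist (Xs i) (Ys j))
      = (\<Sum>p\<in>matching. lcs_dist (Xs (fst p + 1)) (Ys (snd p + 1)))"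
    unfolding alignment_def sum.reindex[OF inj_on_Suc_pair] by (simp add: case_prod_beta)
  moreover have "lcs_dist (Xs (fst p + 1)) (Ys (snd p + 1)) + 2 * inner_lcs (fst p) (snd p) = lx + ly"
    if "p \<in> matching" for p
    using that matching_subset lcs_dist_add_inner_lcs[of "fst p" "snd p"] by auto
  ultimately show ?thesis by (simp add: sum_distrib_left sum.distrib[symmetric])
qed

lemma alignment_spread:
  assumes "matching \<noteq> {}"
  shows "Max (fst ` alignment) + 1 - Min (fst ` alignment)
    = Max (fst ` matching) + 1 - Min (fst ` matching)"
proof -
  have fst_alignment: "fst ` alignment = Suc ` fst ` matching"
    unfolding alignment_def by (force simp: image_image case_prod_beta)
  have "Max (Suc ` fst ` matching) = Suc (Max (fst ` matching))"
    "Min (Suc ` fst ` matching) = Suc (Min (fst ` matching))"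
    using assms finite_matching by (simp_all add: mono_Max_commute mono_Min_commute mono_Suc)
  thus ?thesis unfolding fst_alignment by simp
qed

lemma card_matching_le: "card matching \<le> m"
  using card_image[OF inj_on_snd_matching] card_mono[of "{..<m}" "snd ` matching"] matching_subset
  by fastforce

lemma cost_le_lcs_dist:
  assumes "cost \<le> (\<Sum>(i, j)\<in>alignment. lcs_dist (Xs i) (Ys j)) + (m - card matching) * (lx + ly) + 2 * e"
    and "LCS X Y + e \<le> (n - 1) * k2 + 2 * k1 * m + (\<Sum>p\<in>matching. inner_lcs (fst p) (snd p))"
  shows "cost + 2 * n * k2 \<le> lcs_dist X Y"
proof -
  have "card matching * (lx + ly) + (m - card matching) * (lx + ly) = m * (lx + ly)"
    using card_matching_le by (simp add: add_mult_distrib[symmetric])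
  thus ?thesis
    using assms sum_lcs_dist_alignment lcs_dist_add_LCS[of X Y] length_X_add_length_Y by linarith
qed

text \<open>If all of \<open>Y\<close> is matched but the matched blocks of \<open>X\<close> are spread out, one pair is
  dropped: its penalty \<open>\<gamma> \<le> lx + ly \<le> 2 k2\<close> is paid by \<open>penalty_bound\<close>.\<close>

lemma cheap_alignment:
  assumes LCS_eq: "LCS X Y = (\<Sum>t<n. lcs_gx t) + (\<Sum>t<n - 1. lcs_sep t)"
  obtains L where "L \<in> alignments n m" "align_cost Xs Ys n m L + 2 * n * k2 \<le> lcs_dist X Y"
proof (cases "card matching = m \<and> m < Max (fst ` matching) + 1 - Min (fst ` matching)")
  case True
  then obtain x where x: "x \<in> alignment"
    using m_pos card_alignment by (metis card.empty ex_in_conv not_one_le_zero)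
  define L where "L = alignment - {x}"
  have "finite alignment" unfolding alignment_def using finite_matching by simp
  then have "card L = m - 1" "(\<Sum>(i, j)\<in>L. lcs_dist (Xs i) (Ys j))
      \<le> (\<Sum>(i, j)\<in>alignment. lcs_dist (Xs i) (Ys j))"
    using x True card_alignment unfolding L_def by (simp_all add: sum_diff1_nat)
  then have "align_cost Xs Ys n m L
      \<le> (\<Sum>(i, j)\<in>alignment. lcs_dist (Xs i) (Ys j)) + (m - card matching) * (lx + ly) + 2 * k2"
    using m_pos gamma_le True unfolding align_cost_def k2_def k1_def by simp
  moreover have "LCS X Y + k2 \<le> (n - 1) * k2 + 2 * k1 * m + (\<Sum>p\<in>matching. inner_lcs (fst p) (snd p))"
    using penalty_bound True LCS_eq by simp
  ultimately show ?thesis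
    using that[of L] cost_le_lcs_dist subset_alignment_in_alignments[of L] L_def by blast
next
  case False
  have "align_cost Xs Ys n m alignment
      \<le> (\<Sum>(i, j)\<in>alignment. lcs_dist (Xs i) (Ys j)) + (m - card matching) * (lx + ly) + 2 * 0"
  proof (cases "card matching < m")
    case True
    thus ?thesis using gamma_le card_alignment unfolding align_cost_def by simp
  next
    case not_less: False
    then have "card matching = m" using card_matching_le by simp
    moreover have "matching \<noteq> {}" using calculation m_pos by auto
    ultimately show ?thesis
      using False alignment_spread card_alignment unfolding align_cost_def by simp
  qed
  moreover have "LCS X Y + 0 \<le> (n - 1) * k2 + 2 * k1 * m + (\<Sum>p\<in>matching. inner_lcs (fst p) (snd p))"
    using total_bound LCS_eq by simp
  ultimately show ?thesis
    using that[OF subset_alignment_in_alignments[OF order_refl]] cost_le_lcs_dist by blast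
qed

end

context lcs_reduction
begin

lemma exists_alignment_cost_le:
  obtains L where "L \<in> alignments n m" "align_cost Xs Ys n m L + 2 * n * k2 \<le> lcs_dist X Y"
proof -
  obtain c where c: "mono c"
    "LCS X Y = (\<Sum>t<n. LCS (GX t) (map ychar [c (2 * t)..<c (2 * t + 1)]))
      + (\<Sum>t<n - 1. LCS (replicate k2 \<mu>) (map ychar [c (2 * t + 1)..<c (2 * t + 2)]))"
    by (rule LCS_X_Y_cut)
  interpret cut: lcs_cut \<Sigma> Xs Ys \<sigma> \<rho> \<mu> n m lx ly c
    by (intro lcs_cut.intro lcs_cut_axioms.intro lcs_reduction_axioms c(1))
  show ?thesis
    by (rule cut.cheap_alignment[OF _ that])
      (simp add: c(2) cut.lcs_gx_def cut.lcs_sep_def cut.gx_start_def cut.gx_end_def)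
qed

theorem lcs_dist_bounds:
  "int (Min (align_cost Xs Ys n m ` alignments n m)) \<le> int (lcs_dist X Y) - int (2 * n * k2)
   \<and> int (lcs_dist X Y) - int (2 * n * k2)
       \<le> int (Min (align_cost Xs Ys n m ` structured_alignments n m))"
proof
  obtain L where L: "L \<in> alignments n m" "align_cost Xs Ys n m L + 2 * n * k2 \<le> lcs_dist X Y"
    by (rule exists_alignment_cost_le)
  have "Min (align_cost Xs Ys n m ` alignments n m) \<le> align_cost Xs Ys n m L"
    using L(1) finite_alignments by simp
  thus "int (Min (align_cost Xs Ys n m ` alignments n m)) \<le> int (lcs_dist X Y) - int (2 * n * k2)"
    using L(2) by linarith
next
  have "structured_alignments n m \<noteq> {}" unfolding structured_alignments_def by blast
  moreover have "finite (structured_alignments n m)" unfolding structured_alignments_def by simp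
  ultimately obtain L where L: "L \<in> structured_alignments n m"
    "Min (align_cost Xs Ys n m ` structured_alignments n m) = align_cost Xs Ys n m L"
    by (metis (no_types, lifting) Min_in empty_is_image finite_imageI imageE)
  thus "int (lcs_dist X Y) - int (2 * n * k2)
      \<le> int (Min (align_cost Xs Ys n m ` structured_alignments n m))"
    using lcs_dist_le_structured_cost[OF L(1)] by linarith
qed

end

theorem mainTheorem7:
  fixes \<Sigma> :: "'a set" and Xs Ys :: "nat \<Rightarrow> 'a list"
    and \<sigma> \<rho> \<mu> :: 'a and n m lx ly :: nat
  assumes "1 \<le> m" and "m \<le> n"
    and "\<And>i. i \<in> {1..n} \<Longrightarrow> length (Xs i) = lx \<and> set (Xs i) \<subseteq> \<Sigma>"
    and "\<And>j. j \<in> {1..m} \<Longrightarrow> length (Ys j) = ly \<and> set (Ys j) \<subseteq> \<Sigma>"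
    and "\<sigma> \<notin> \<Sigma>" and "\<rho> \<notin> \<Sigma>" and "\<mu> \<notin> \<Sigma>"
    and "\<sigma> \<noteq> \<rho>" and "\<sigma> \<noteq> \<mu>" and "\<rho> \<noteq> \<mu>"
  shows "let \<kappa>1 = 4 * (lx + ly); \<kappa>2 = 2 * \<kappa>1 + lx;
             X = build_X \<sigma> \<rho> \<mu> \<kappa>1 \<kappa>2 Xs n;
             Y = build_Y \<sigma> \<rho> \<mu> \<kappa>1 \<kappa>2 Ys n m;
             C = 2 * n * \<kappa>2
         in int (Min (align_cost Xs Ys n m ` alignments n m)) \<le> int (lcs_dist X Y) - int C
          \<and> int (lcs_dist X Y) - int C \<le> int (Min (align_cost Xs Ys n m ` structured_alignments n m))"
proof -
  interpret lcs_reduction \<Sigma> Xs Ys \<sigma> \<rho> \<mu> n m lx ly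
    using assms by unfold_locales auto
  show ?thesis using lcs_dist_bounds unfolding Let_def k2_def k1_def .
qed

end
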